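(* Let $\mathcal B$ be a BMC with $\mathbf c^*_q<\infty$ for all $q\in\mathcal T$, and consider the Q-learning process with learning rates $\lambda_i\in[0,1]$ satisfying $\sum_{i=0}^\infty\lambda_i=\infty$ and $\sum_{i=0}^\infty\lambda_i^2<\infty$, and a fixed selection distribution with $p_q\ge p_{\min}>0$ for all $q$. Then for every initial vector $Q_0\ge\mathbf 0$, $\lim_{i\to\infty}Q_i=\mathbf c^*$ almost surely.
   Context: A branching Markov chain (BMC) is $\mathcal B=(\mathcal T,p,c)$ with $\mathcal T$ a finite set of types, $p(q)$ for each $q\in\mathcal T$ a probability distribution with finite support over finite lists $\mathcal T^*$ of types (the offspring distribution), and $c:\mathcal T\to\mathbb R_{>0}$ a strictly positive cost. For a list $\alpha$, $|\alpha|$ is its length and $\alpha_i$ its $i$-th element. $\mathbf c^*_q\in[0,\infty]$ denotes the expected total cost until extinction starting from the single entity $q$; equivalently $\mathbf c^*$ is the least fixed point in $[0,\infty]^{\mathcal T}$ of $F(\mathbf x)_q=c(q)+\sum_\alpha p(q)(\alpha)\sum_{i=1}^{|\alpha|}\mathbf x_{\alpha_i}$. Q-learning process for a BMC: given deterministic learning rates $\lambda_i\in[0,1]$, a probability distribution $(p_q)_{q\in\mathcal T}$ and an initial vector $Q_0\in\mathbb R_{\ge0}^{\mathcal T}$, at each step $i=0,1,2,\dots$ a type $q_i$ is selected with probability $p_{q_i}$ independently of all previous randomness, then a list $\beta^i$ is drawn from $p(q_i)$ independently, and $Q_{i+1}(q_i)=(1-\lambda_i)Q_i(q_i)+\lambda_i\big(c(q_i)+\sum_{j=1}^{|\beta^i|}Q_i(\beta^i_j)\big)$,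 while $Q_{i+1}(q)=Q_i(q)$ for $q\ne q_i$. *)

theory Defs
  imports "HOL-Probability.Probability"
begin

definition bmc :: "('a::finite \<Rightarrow> 'a list pmf) \<Rightarrow> ('a \<Rightarrow> real) \<Rightarrow> bool" where
  "bmc p c \<longleftrightarrow> (\<forall>q. finite (set_pmf (p q))) \<and> (\<forall>q. c q > 0)"

definition bmc_F :: "('a::finite \<Rightarrow> 'a list pmf) \<Rightarrow> ('a \<Rightarrow> real) \<Rightarrow> ('a \<Rightarrow> ennreal) \<Rightarrow> ('a \<Rightarrow> ennreal)" where
  "bmc_F p c x = (\<lambda>q. ennreal (c q) +
      (\<Sum>\<alpha>\<in>set_pmf (p q). ennreal (pmf (p q) \<alpha>) * (\<Sum>i<length \<alpha>. x (\<alpha> ! i))))"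

text \<open>Expected total cost until extinction: least fixed point of F.\<close>
definition cstar :: "('a::finite \<Rightarrow> 'a list pmf) \<Rightarrow> ('a \<Rightarrow> real) \<Rightarrow> 'a \<Rightarrow> ennreal" where
  "cstar p c = lfp (bmc_F p c)"

definition step_dist :: "'a pmf \<Rightarrow> ('a \<Rightarrow> 'a list pmf) \<Rightarrow> ('a \<times> 'a list) pmf" where
  "step_dist sel p = bind_pmf sel (\<lambda>q. map_pmf (\<lambda>\<beta>. (q, \<beta>)) (p q))"

text \<open>The Q-learning iterates, as a function of the i.i.d. sequence of samples \<omega>.\<close>
fun Qlearn :: "(nat \<Rightarrow> real) \<Rightarrow> ('a \<Rightarrow> real) \<Rightarrow> ('a \<Rightarrow> real) \<Rightarrow> ('a \<times> 'a list) stream \<Rightarrow> nat \<Rightarrow> ('a \<Rightarrow> real)" where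
  "Qlearn lr c Q0 \<omega> 0 = Q0"
| "Qlearn lr c Q0 \<omega> (Suc i) =
     (let Qi = Qlearn lr c Q0 \<omega> i; q = fst (\<omega> !! i); \<beta> = snd (\<omega> !! i)
      in Qi(q := (1 - lr i) * Qi q + lr i * (c q + (\<Sum>j<length \<beta>. Qi (\<beta> ! j)))))"

end

theory Submission
  imports Defs
begin

(* Let c* be the (finite) expected total costs and M the mean offspring matrix, so that
   c* = c + M c*.  As c > 0, M c* < c* componentwise, and a truncated Neumann series yields
   weights y >= 1 with y^T M <= y^T.  The Lyapunov function
   V(Q) = sum_q y_q (Q_q - c*_q)^2 / (c*_q p_q) then satisfies the drift inequality
   E[V(Q_{i+1}) | Q_i] <= (1 - delta lambda_i) V(Q_i) + C lambda_i^2 (V(Q_i) + 1).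
   Dividing by prod_{k<i} (1 + C lambda_k^2) and adding the tail sum_{k>=i} C lambda_k^2 turns
   V(Q_i) into a nonnegative supermartingale (Robbins-Siegmund).  Its expectation tends to 0,
   because E V(Q_i) obeys the deterministic recursion above and sum lambda_i = infinity,
   sum lambda_i^2 < infinity; Ville's maximal inequality then gives V(Q_i) -> 0, i.e.
   Q_i -> c*, almost surely. *)

lemma space_stream_space_pmf [simp]: "space (stream_space (measure_pmf D)) = UNIV"
  by (simp add: space_stream_space)

lemma emeasure_stream_space_pmf_UNIV [simp]: "emeasure (stream_space (measure_pmf D)) UNIV = 1"
  using prob_space.emeasure_space_1[OF prob_space.prob_space_stream_space[OF prob_space_measure_pmf]]
  by simp

lemma measurable_stake_pmf:
  fixes D :: "'b::countable pmf"
  shows "(\<lambda>\<omega>. h (stake k \<omega>)) \<in> measurable (stream_space (measure_pmf D)) (count_space UNIV)"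
proof -
  have "sets (stream_space (measure_pmf D)) = sets (stream_space (count_space UNIV))"
    by (rule sets_stream_space_cong) simp
  moreover have "(\<lambda>\<omega>. h (stake k \<omega>)) \<in> measurable (stream_space (count_space UNIV)) (count_space UNIV)"
    by (rule measurable_compose[OF measurable_stake]) simp
  ultimately show ?thesis
    using measurable_cong_sets by blast
qed

lemma borel_measurable_stake_pmf:
  fixes D :: "'b::countable pmf" and h :: "'b list \<Rightarrow> 'c::topological_space"
  shows "(\<lambda>\<omega>. h (stake k \<omega>)) \<in> borel_measurable (stream_space (measure_pmf D))"
  by (rule measurable_compose[OF measurable_stake_pmf]) simp

lemma sets_stake_pmf:
  fixes D :: "'b::countable pmf"
  shows "{\<omega>. P (stake k \<omega>)} \<in> sets (stream_space (measure_pmf D))"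
  using measurable_stake_pmf[of "\<lambda>xs. P xs" k D, THEN measurable_sets, of "{True}"]
  by (simp add: vimage_def)

lemma nn_integral_stake_Suc:
  fixes D :: "'b::countable pmf" and g :: "'b list \<Rightarrow> ennreal"
  shows "(\<integral>\<^sup>+\<omega>. g (stake (Suc k) \<omega>) \<partial>stream_space (measure_pmf D))
       = (\<integral>\<^sup>+\<omega>. (\<integral>\<^sup>+x. g (stake k \<omega> @ [x]) \<partial>measure_pmf D) \<partial>stream_space (measure_pmf D))"
proof (induction k arbitrary: g)
  case 0
  show ?case
    by (subst prob_space.nn_integral_stream_space[OF prob_space_measure_pmf])
      (simp_all add: borel_measurable_stake_pmf[where h=g and k=1, simplified])
next
  case (Suc k)
  note stream_unfold = prob_space.nn_integral_stream_space[OF prob_space_measure_pmf]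
  have "(\<integral>\<^sup>+\<omega>. g (stake (Suc (Suc k)) \<omega>) \<partial>stream_space (measure_pmf D))
     = (\<integral>\<^sup>+y. (\<integral>\<^sup>+\<omega>. g (y # stake (Suc k) \<omega>) \<partial>stream_space (measure_pmf D)) \<partial>measure_pmf D)"
    by (subst stream_unfold) (rule borel_measurable_stake_pmf, simp)
  also have "\<dots> = (\<integral>\<^sup>+y. (\<integral>\<^sup>+\<omega>. (\<integral>\<^sup>+x. g (y # stake k \<omega> @ [x]) \<partial>measure_pmf D)
                      \<partial>stream_space (measure_pmf D)) \<partial>measure_pmf D)"
    using Suc[of "\<lambda>xs. g (y # xs)" for y] by simp
  also have "\<dots> = (\<integral>\<^sup>+\<omega>. (\<integral>\<^sup>+x. g (stake (Suc k) \<omega> @ [x]) \<partial>measure_pmf D) \<partial>stream_space (measure_pmf D))"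
    by (subst (2) stream_unfold)
      (rule borel_measurable_stake_pmf[where h="\<lambda>xs. \<integral>\<^sup>+x. g (xs @ [x]) \<partial>measure_pmf D"], simp)
  finally show ?case .
qed

text \<open>A process given by its values \<open>f n xs\<close> on the first \<open>n\<close> samples \<open>xs\<close> of an i.i.d. sequence
  drawn from \<open>D\<close>; the condition is the supermartingale property for the natural filtration.\<close>
definition prefix_supermartingale :: "'b pmf \<Rightarrow> (nat \<Rightarrow> 'b list \<Rightarrow> ennreal) \<Rightarrow> bool" where
  "prefix_supermartingale D f \<longleftrightarrow>
     (\<forall>xs. (\<integral>\<^sup>+x. f (Suc (length xs)) (xs @ [x]) \<partial>measure_pmf D) \<le> f (length xs) xs)"

lemma ville_inequality_finite:
  fixes D :: "'b::countable pmf"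
  assumes "prefix_supermartingale D f"
  shows "\<epsilon> * emeasure (stream_space (measure_pmf D)) {\<omega>. \<exists>j. n \<le> j \<and> j \<le> n + m \<and> \<epsilon> \<le> f j (stake j \<omega>)}
     \<le> (\<integral>\<^sup>+\<omega>. f n (stake n \<omega>) \<partial>stream_space (measure_pmf D))"
proof -
  let ?S = "stream_space (measure_pmf D)"
  define hit where "hit m xs \<longleftrightarrow> (\<exists>j. n \<le> j \<and> j \<le> n + m \<and> \<epsilon> \<le> f j (take j xs))" for m xs
  \<comment> \<open>the process stopped at the first time it reaches \<open>\<epsilon>\<close>\<close>
  define Y where "Y m \<omega> = (if hit m (stake (n + m) \<omega>) then \<epsilon> else f (n + m) (stake (n + m) \<omega>))" for m \<omega>
  have hit_stake: "hit m (stake (n + m) \<omega>) \<longleftrightarrow> (\<exists>j. n \<le> j \<and> j \<le> n + m \<and> \<epsilon> \<le> f j (stake j \<omega>))" for m \<omega>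
    unfolding hit_def by (auto simp: take_stake min_absorb1)
  have Y_le: "(\<integral>\<^sup>+\<omega>. Y m \<omega> \<partial>?S) \<le> (\<integral>\<^sup>+\<omega>. f n (stake n \<omega>) \<partial>?S)" for m
  proof (induction m)
    case 0
    show ?case by (rule nn_integral_mono) (auto simp: Y_def hit_def take_stake)
  next
    case (Suc m)
    define G where "G ys = (if hit m (take (n + m) ys) then \<epsilon> else f (Suc (n + m)) ys)" for ys
    have "(\<integral>\<^sup>+\<omega>. Y (Suc m) \<omega> \<partial>?S) \<le> (\<integral>\<^sup>+\<omega>. G (stake (Suc (n + m)) \<omega>) \<partial>?S)"
    proof (rule nn_integral_mono)
      fix \<omega> :: "'b stream"
      have "take (n + m) (stake (Suc (n + m)) \<omega>) = stake (n + m) \<omega>"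
        by (subst take_stake) simp
      moreover have "hit (Suc m) (stake (n + Suc m) \<omega>) \<longleftrightarrow>
          hit m (stake (n + m) \<omega>) \<or> \<epsilon> \<le> f (Suc (n + m)) (stake (Suc (n + m)) \<omega>)"
        unfolding hit_stake
        by (auto simp: le_Suc_eq simp del: stake.simps, intro exI[of _ "Suc (n + m)"], simp)
      ultimately show "Y (Suc m) \<omega> \<le> G (stake (Suc (n + m)) \<omega>)"
        unfolding Y_def G_def by auto
    qed
    also have "\<dots> = (\<integral>\<^sup>+\<omega>. (\<integral>\<^sup>+x. G (stake (n + m) \<omega> @ [x]) \<partial>measure_pmf D) \<partial>?S)"
      by (rule nn_integral_stake_Suc)
    also have "\<dots> = (\<integral>\<^sup>+\<omega>. (if hit m (stake (n + m) \<omega>) then \<epsilon>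
                       else (\<integral>\<^sup>+x. f (Suc (n + m)) (stake (n + m) \<omega> @ [x]) \<partial>measure_pmf D)) \<partial>?S)"
      by (rule nn_integral_cong) (simp add: G_def measure_pmf.emeasure_space_1)
    also have "\<dots> \<le> (\<integral>\<^sup>+\<omega>. Y m \<omega> \<partial>?S)"
      using assms[unfolded prefix_supermartingale_def, rule_format, of "stake (n + m) _"]
      by (intro nn_integral_mono) (auto simp: Y_def)
    finally show ?case using Suc.IH by (rule order_trans)
  qed
  let ?A = "{\<omega>. \<exists>j. n \<le> j \<and> j \<le> n + m \<and> \<epsilon> \<le> f j (stake j \<omega>)}"
  have "?A = {\<omega>. hit m (stake (n + m) \<omega>)}"
    using hit_stake by auto
  then have A_sets: "?A \<in> sets ?S"
    by (simp add: sets_stake_pmf)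
  have "\<epsilon> * emeasure ?S ?A = (\<integral>\<^sup>+\<omega>. \<epsilon> * indicator ?A \<omega> \<partial>?S)"
    by (rule nn_integral_cmult_indicator[OF A_sets, symmetric])
  also have "\<dots> \<le> (\<integral>\<^sup>+\<omega>. Y m \<omega> \<partial>?S)"
    by (rule nn_integral_mono) (auto simp: Y_def hit_stake split: split_indicator)
  finally show ?thesis using Y_le[of m] by (rule order_trans)
qed

lemma ville_inequality:
  fixes D :: "'b::countable pmf"
  assumes "prefix_supermartingale D f"
  shows "\<epsilon> * emeasure (stream_space (measure_pmf D)) {\<omega>. \<exists>j\<ge>n. \<epsilon> \<le> f j (stake j \<omega>)}
     \<le> (\<integral>\<^sup>+\<omega>. f n (stake n \<omega>) \<partial>stream_space (measure_pmf D))"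
proof -
  let ?S = "stream_space (measure_pmf D)"
  define A where "A m = {\<omega>. \<exists>j. n \<le> j \<and> j \<le> n + m \<and> \<epsilon> \<le> f j (stake j \<omega>)}" for m
  have "A m = {\<omega>. \<exists>j. n \<le> j \<and> j \<le> n + m \<and> \<epsilon> \<le> f j (take j (stake (n + m) \<omega>))}" for m
    unfolding A_def by (auto simp: take_stake min_absorb1)
  then have "range A \<subseteq> sets ?S"
    using sets_stake_pmf[of "\<lambda>xs. \<exists>j. n \<le> j \<and> j \<le> n + m \<and> \<epsilon> \<le> f j (take j xs)" "n + m" D for m]
    by auto
  moreover have "incseq A"
    unfolding incseq_def A_def by fastforce
  moreover have "(\<Union>m. A m) = {\<omega>. \<exists>j\<ge>n. \<epsilon> \<le> f j (stake j \<omega>)}"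
    unfolding A_def
  proof auto
    fix \<omega> j
    assume "n \<le> j" "\<epsilon> \<le> f j (stake j \<omega>)"
    then show "\<exists>m j. n \<le> j \<and> j \<le> n + m \<and> \<epsilon> \<le> f j (stake j \<omega>)"
      by (intro exI[of _ "j - n"] exI[of _ j]) simp
  qed
  ultimately have "\<epsilon> * emeasure ?S {\<omega>. \<exists>j\<ge>n. \<epsilon> \<le> f j (stake j \<omega>)} = (SUP m. \<epsilon> * emeasure ?S (A m))"
    by (metis SUP_emeasure_incseq SUP_mult_left_ennreal)
  also have "\<dots> \<le> (\<integral>\<^sup>+\<omega>. f n (stake n \<omega>) \<partial>?S)"
    unfolding A_def by (intro SUP_least ville_inequality_finite assms)
  finally show ?thesis .
qed

lemma AE_eventually_less_prefix_supermartingale: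
  fixes D :: "'b::countable pmf"
  assumes sup: "prefix_supermartingale D f"
    and lim: "(\<lambda>n. \<integral>\<^sup>+\<omega>. f n (stake n \<omega>) \<partial>stream_space (measure_pmf D)) \<longlonglongrightarrow> 0"
    and "0 < \<epsilon>"
  shows "AE \<omega> in stream_space (measure_pmf D). \<forall>\<^sub>F j in sequentially. f j (stake j \<omega>) < \<epsilon>"
proof -
  let ?S = "stream_space (measure_pmf D)"
  define N where "N = {\<omega>. \<forall>n. \<exists>j\<ge>n. \<epsilon> \<le> f j (stake j \<omega>)}"
  have [measurable]: "\<And>j. Measurable.pred ?S (\<lambda>\<omega>. \<epsilon> \<le> f j (stake j \<omega>))"
    by (rule measurable_compose[OF measurable_stake_pmf]) simp
  have tail_sets: "{\<omega>. \<exists>j\<ge>n. \<epsilon> \<le> f j (stake j \<omega>)} \<in> sets ?S" for n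
  proof -
    have "Measurable.pred ?S (\<lambda>\<omega>. \<exists>j\<ge>n. \<epsilon> \<le> f j (stake j \<omega>))"
      by measurable
    then show ?thesis by (simp add: pred_def)
  qed
  have "Measurable.pred ?S (\<lambda>\<omega>. \<forall>n. \<exists>j\<ge>n. \<epsilon> \<le> f j (stake j \<omega>))"
    by measurable
  then have N_sets: "N \<in> sets ?S"
    by (simp add: N_def pred_def)
  have "\<epsilon> * emeasure ?S N \<le> (\<integral>\<^sup>+\<omega>. f n (stake n \<omega>) \<partial>?S)" for n
  proof -
    have "emeasure ?S N \<le> emeasure ?S {\<omega>. \<exists>j\<ge>n. \<epsilon> \<le> f j (stake j \<omega>)}"
      by (rule emeasure_mono) (auto simp: N_def tail_sets)
    then have "\<epsilon> * emeasure ?S N \<le> \<epsilon> * emeasure ?S {\<omega>. \<exists>j\<ge>n. \<epsilon> \<le> f j (stake j \<omega>)}"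
      by (rule mult_left_mono) simp
    also have "\<dots> \<le> (\<integral>\<^sup>+\<omega>. f n (stake n \<omega>) \<partial>?S)"
      by (rule ville_inequality[OF sup])
    finally show ?thesis .
  qed
  then have "\<epsilon> * emeasure ?S N \<le> 0"
    by (intro LIMSEQ_le_const[OF lim]) auto
  with \<open>0 < \<epsilon>\<close> have "N \<in> null_sets ?S"
    using N_sets by (auto simp: null_sets_def)
  then show ?thesis
    by (rule AE_I') (auto simp: N_def eventually_sequentially not_less)
qed

lemma AE_tendsto_zero_prefix_supermartingale:
  fixes D :: "'b::countable pmf"
  assumes "prefix_supermartingale D f"
    and "(\<lambda>n. \<integral>\<^sup>+\<omega>. f n (stake n \<omega>) \<partial>stream_space (measure_pmf D)) \<longlonglongrightarrow> 0"
  shows "AE \<omega> in stream_space (measure_pmf D). (\<lambda>j. f j (stake j \<omega>)) \<longlonglongrightarrow> 0"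
proof -
  define e where "e k = ennreal (inverse (Suc k))" for k
  have e_lim: "e \<longlonglongrightarrow> 0"
    unfolding e_def using LIMSEQ_inverse_real_of_nat by (intro tendsto_ennrealI[of _ 0, simplified])
  have "AE \<omega> in stream_space (measure_pmf D). \<forall>k. \<forall>\<^sub>F j in sequentially. f j (stake j \<omega>) < e k"
    using assms by (intro AE_all_countable[THEN iffD2] allI AE_eventually_less_prefix_supermartingale)
      (auto simp: e_def)
  then show ?thesis
  proof (rule AE_mp, intro AE_I2 impI)
    fix \<omega> :: "'b stream"
    assume small: "\<forall>k. \<forall>\<^sub>F j in sequentially. f j (stake j \<omega>) < e k"
    show "(\<lambda>j. f j (stake j \<omega>)) \<longlonglongrightarrow> 0"
    proof (rule order_tendstoI)
      fix a :: ennreal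
      assume "0 < a"
      then obtain k where "e k < a"
        using order_tendstoD(2)[OF e_lim] by (meson eventually_sequentially order_refl)
      then show "\<forall>\<^sub>F j in sequentially. f j (stake j \<omega>) < a"
        using small[rule_format, of k] by (auto elim: eventually_mono)
    qed simp
  qed
qed

lemma contracting_recursion_unroll:
  fixes e lr \<beta> :: "nat \<Rightarrow> real"
  assumes e_nonneg: "\<And>n. 0 \<le> e n" and lr: "\<And>n. 0 \<le> \<delta> * lr n" "\<And>n. \<delta> * lr n \<le> 1"
    and \<beta>_nonneg: "\<And>n. 0 \<le> \<beta> n"
    and rec: "\<And>n. e (Suc n) \<le> (1 - \<delta> * lr n) * e n + \<beta> n"
  shows "e (N + m) \<le> exp (- \<delta> * (\<Sum>k<m. lr (N + k))) * e N + (\<Sum>k<m. \<beta> (N + k))"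
proof (induction m)
  case (Suc m)
  let ?n = "N + m" and ?E = "exp (- \<delta> * (\<Sum>k<m. lr (N + k))) * e N" and ?B = "\<Sum>k<m. \<beta> (N + k)"
  have "0 \<le> ?E" "0 \<le> ?B"
    using e_nonneg \<beta>_nonneg by (simp_all add: sum_nonneg)
  have "e (N + Suc m) \<le> (1 - \<delta> * lr ?n) * e ?n + \<beta> ?n"
    using rec[of ?n] by simp
  also have "\<dots> \<le> (1 - \<delta> * lr ?n) * (?E + ?B) + \<beta> ?n"
    using Suc lr(2)[of ?n] by (intro add_right_mono mult_left_mono) simp_all
  also have "\<dots> \<le> exp (- \<delta> * lr ?n) * ?E + ?B + \<beta> ?n"
  proof -
    have "1 - \<delta> * lr ?n \<le> exp (- \<delta> * lr ?n)"
      using exp_ge_add_one_self[of "- \<delta> * lr ?n"] by simp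
    then have "(1 - \<delta> * lr ?n) * ?E \<le> exp (- \<delta> * lr ?n) * ?E"
      using \<open>0 \<le> ?E\<close> by (rule mult_right_mono)
    moreover have "(1 - \<delta> * lr ?n) * ?B \<le> ?B"
      using lr[of ?n] \<open>0 \<le> ?B\<close> by (intro mult_left_le_one_le) simp_all
    ultimately show ?thesis by (simp only: distrib_left)
  qed
  also have "\<dots> = exp (- \<delta> * (\<Sum>k<Suc m. lr (N + k))) * e N + (\<Sum>k<Suc m. \<beta> (N + k))"
    by (simp add: distrib_left exp_add[symmetric] algebra_simps)
  finally show ?case .
qed simp

lemma partial_sums_unbounded_of_not_summable:
  fixes f :: "nat \<Rightarrow> real"
  assumes "\<And>n. 0 \<le> f n" and "\<not> summable f"
  shows "\<exists>m. K < (\<Sum>k<m. f (N + k))"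
proof (rule ccontr)
  assume "\<not> ?thesis"
  then have "(\<Sum>k<Suc m. f (N + k)) \<le> K" for m
    by (meson not_less)
  then have "(\<Sum>k\<le>m. f (k + N)) \<le> K" for m
    by (simp add: lessThan_Suc_atMost add.commute)
  then have "summable (\<lambda>k. f (k + N))"
    by (intro bounded_imp_summable) (simp_all add: assms(1))
  with assms(2) show False
    by (simp add: summable_iff_shift)
qed

lemma contracting_recursion_tendsto_zero:
  fixes e lr \<beta> :: "nat \<Rightarrow> real"
  assumes e_nonneg: "\<And>n. 0 \<le> e n" and "0 < \<delta>" and lr: "\<And>n. 0 \<le> lr n" "\<And>n. \<delta> * lr n \<le> 1"
    and lr_divergent: "\<not> summable lr"
    and \<beta>_nonneg: "\<And>n. 0 \<le> \<beta> n" and \<beta>_summable: "summable \<beta>"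
    and rec: "\<And>n. e (Suc n) \<le> (1 - \<delta> * lr n) * e n + \<beta> n"
  shows "e \<longlonglongrightarrow> 0"
proof (rule LIMSEQ_I)
  fix r :: real
  assume "0 < r"
  have unroll: "e (N + m) \<le> exp (- \<delta> * (\<Sum>k<m. lr (N + k))) * e N + (\<Sum>k<m. \<beta> (N + k))" for N m
    using assms by (intro contracting_recursion_unroll) simp_all
  obtain N where N: "\<And>n. n \<ge> N \<Longrightarrow> \<bar>\<Sum>i. \<beta> (i + n)\<bar> < r / 2"
    using suminf_exist_split[OF _ \<beta>_summable, of "r / 2"] \<open>0 < r\<close> by auto
  have tail: "(\<Sum>k<m. \<beta> (N + k)) < r / 2" for m
  proof -
    have "(\<Sum>k<m. \<beta> (N + k)) \<le> (\<Sum>i. \<beta> (i + N))"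
      using sum_le_suminf[OF summable_ignore_initial_segment[OF \<beta>_summable, of N], of "{..<m}"] \<beta>_nonneg
      by (simp add: add.commute)
    then show ?thesis using N[of N] by linarith
  qed
  obtain m0 where m0: "2 * e N / (r * \<delta>) < (\<Sum>k<m0. lr (N + k))"
    using partial_sums_unbounded_of_not_summable[OF lr(1) lr_divergent] by blast
  show "\<exists>n0. \<forall>n\<ge>n0. norm (e n - 0) < r"
  proof (intro exI allI impI)
    fix n
    assume "N + m0 \<le> n"
    then obtain m where n: "n = N + m" and "m0 \<le> m"
      using le_Suc_ex by force
    let ?s = "\<Sum>k<m. lr (N + k)"
    have "(\<Sum>k<m0. lr (N + k)) \<le> ?s"
      using \<open>m0 \<le> m\<close> lr by (intro sum_mono2) simp_all
    with m0 have "2 * e N / (r * \<delta>) < ?s"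
      by simp
    then have "2 * e N < ?s * (r * \<delta>)"
      using \<open>0 < r\<close> \<open>0 < \<delta>\<close> by (simp add: pos_divide_less_eq)
    also have "\<dots> \<le> r * exp (\<delta> * ?s)"
    proof -
      have "\<delta> * ?s \<le> exp (\<delta> * ?s)"
        using exp_ge_add_one_self[of "\<delta> * ?s"] by linarith
      then show ?thesis
        using mult_left_mono[of _ _ r] \<open>0 < r\<close> by (simp add: mult_ac)
    qed
    finally have "e N < r / 2 * exp (\<delta> * ?s)"
      by simp
    then have "exp (- \<delta> * ?s) * e N < exp (- \<delta> * ?s) * (r / 2 * exp (\<delta> * ?s))"
      by (rule mult_strict_left_mono) simp
    also have "\<dots> = r / 2"
      by (simp add: exp_minus_inverse mult.commute mult.left_commute)
    finally show "norm (e n - 0) < r"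
      using unroll[of N m] tail[of m] e_nonneg[of n] n by simp
  qed
qed

lemma robbins_monro_recursion_bounded:
  fixes e lr :: "nat \<Rightarrow> real"
  assumes e_nonneg: "\<And>n. 0 \<le> e n" and "0 \<le> C" and lr: "\<And>n. 0 \<le> \<delta> * lr n"
    and lr2_summable: "summable (\<lambda>n. (lr n)\<^sup>2)"
    and rec: "\<And>n. e (Suc n) \<le> (1 - \<delta> * lr n) * e n + C * (lr n)\<^sup>2 * (e n + 1)"
  shows "e n + 1 \<le> (e 0 + 1) * exp (C * (\<Sum>k. (lr k)\<^sup>2))"
proof -
  have "e n + 1 \<le> (e 0 + 1) * exp (C * (\<Sum>k<n. (lr k)\<^sup>2))"
  proof (induction n)
    case (Suc n)
    have "e (Suc n) + 1 \<le> (1 + C * (lr n)\<^sup>2) * (e n + 1)"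
      using rec[of n] mult_nonneg_nonneg[OF lr[of n] e_nonneg[of n]] by (simp add: algebra_simps)
    also have "\<dots> \<le> exp (C * (lr n)\<^sup>2) * (e n + 1)"
      using e_nonneg[of n] by (intro mult_right_mono) (simp_all add: add.commute exp_ge_add_one_self)
    also have "\<dots> \<le> exp (C * (lr n)\<^sup>2) * ((e 0 + 1) * exp (C * (\<Sum>k<n. (lr k)\<^sup>2)))"
      using Suc by (intro mult_left_mono) simp_all
    also have "\<dots> = (e 0 + 1) * exp (C * (\<Sum>k<Suc n. (lr k)\<^sup>2))"
      by (simp add: distrib_left exp_add)
    finally show ?case .
  qed simp
  also have "\<dots> \<le> (e 0 + 1) * exp (C * (\<Sum>k. (lr k)\<^sup>2))"
    using sum_le_suminf[OF lr2_summable, of "{..<n}"] e_nonneg[of 0] \<open>0 \<le> C\<close>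
    by (intro mult_left_mono) (simp_all add: mult_left_mono)
  finally show ?thesis .
qed

lemma robbins_monro_recursion_tendsto_zero:
  fixes e lr :: "nat \<Rightarrow> real"
  assumes e_nonneg: "\<And>n. 0 \<le> e n" and "0 < \<delta>" "\<delta> \<le> 1" "0 \<le> C"
    and lr: "\<And>n. 0 \<le> lr n" "\<And>n. lr n \<le> 1" and "\<not> summable lr"
    and lr2_summable: "summable (\<lambda>n. (lr n)\<^sup>2)"
    and rec: "\<And>n. e (Suc n) \<le> (1 - \<delta> * lr n) * e n + C * (lr n)\<^sup>2 * (e n + 1)"
  shows "e \<longlonglongrightarrow> 0"
proof -
  define B where "B = (e 0 + 1) * exp (C * (\<Sum>k. (lr k)\<^sup>2))"
  have "0 \<le> \<delta> * lr n" for n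
    using \<open>0 < \<delta>\<close> lr(1)[of n] by simp
  then have bounded: "e n + 1 \<le> B" for n
    unfolding B_def using robbins_monro_recursion_bounded[OF e_nonneg \<open>0 \<le> C\<close> _ lr2_summable rec] by blast
  show ?thesis
  proof (rule contracting_recursion_tendsto_zero)
    show "e (Suc n) \<le> (1 - \<delta> * lr n) * e n + C * B * (lr n)\<^sup>2" for n
      using rec[of n] mult_left_mono[OF bounded[of n], of "C * (lr n)\<^sup>2"] \<open>0 \<le> C\<close>
      by (simp add: mult_ac)
    show "0 \<le> C * B * (lr n)\<^sup>2" for n
      using bounded[of 0] e_nonneg[of 0] \<open>0 \<le> C\<close> by simp
    show "summable (\<lambda>n. C * B * (lr n)\<^sup>2)"
      using lr2_summable by (rule summable_mult)
    show "\<delta> * lr n \<le> 1" for n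
      using mult_le_one[OF \<open>\<delta> \<le> 1\<close> lr(1)[of n] lr(2)[of n]] by simp
  qed (use assms in simp_all)
qed

lemma normalized_drift_step:
  fixes x x' a P T T' :: real
  assumes "0 \<le> a" "1 \<le> P" "x' \<le> (1 + a) * x + a" "T = a + T'"
  shows "x' / (P * (1 + a)) + T' \<le> x / P + T"
proof -
  have "x' / (P * (1 + a)) \<le> ((1 + a) * x + a) / (P * (1 + a))"
    using assms by (intro divide_right_mono) simp_all
  also have "\<dots> = x / P + a / (P * (1 + a))"
    using assms by (simp add: add_divide_distrib)
  also have "a / (P * (1 + a)) \<le> a"
  proof -
    have "1 \<le> P * (1 + a)"
      using assms mult_mono[of 1 P 1 "1 + a"] by simp
    then show ?thesis
      using \<open>0 \<le> a\<close> by (simp add: divide_le_eq mult_le_cancel_left1)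
  qed
  finally show ?thesis
    using assms by simp
qed

lemma prefix_supermartingale_robbins_siegmund:
  fixes D :: "'b::countable pmf" and W :: "nat \<Rightarrow> 'b list \<Rightarrow> real" and a :: "nat \<Rightarrow> real"
  assumes W_nonneg: "\<And>n xs. 0 \<le> W n xs" and a_nonneg: "\<And>n. 0 \<le> a n" and "summable a"
    and drift: "\<And>xs. (\<integral>\<^sup>+x. ennreal (W (Suc (length xs)) (xs @ [x])) \<partial>measure_pmf D)
      \<le> ennreal ((1 + a (length xs)) * W (length xs) xs + a (length xs))"
  shows "prefix_supermartingale D
           (\<lambda>n xs. ennreal (W n xs / (\<Prod>k<n. 1 + a k) + (\<Sum>i. a (i + n))))"
  unfolding prefix_supermartingale_def
proof
  fix xs :: "'b list"
  define k where "k = length xs"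
  define P where "P n = (\<Prod>k<n. 1 + a k)" for n
  define T where "T n = (\<Sum>i. a (i + n))" for n
  have P_ge_1: "1 \<le> P n" for n
    unfolding P_def using a_nonneg by (intro prod_ge_1) simp
  have T_nonneg: "0 \<le> T n" for n
    unfolding T_def using a_nonneg by (intro suminf_nonneg summable_ignore_initial_segment \<open>summable a\<close>)
  have T_Suc: "T k = a k + T (Suc k)"
    unfolding T_def using suminf_split_head[OF summable_ignore_initial_segment[OF \<open>summable a\<close>, of k]]
    by simp
  have "(\<integral>\<^sup>+x. ennreal (W (Suc k) (xs @ [x]) / P (Suc k) + T (Suc k)) \<partial>measure_pmf D)
      = (\<integral>\<^sup>+x. ennreal (1 / P (Suc k)) * ennreal (W (Suc k) (xs @ [x])) + ennreal (T (Suc k)) \<partial>measure_pmf D)"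
    using P_ge_1[of "Suc k"] T_nonneg[of "Suc k"] W_nonneg
    by (intro nn_integral_cong) (simp add: ennreal_plus[symmetric] ennreal_mult[symmetric] del: ennreal_plus)
  also have "\<dots> = ennreal (1 / P (Suc k)) * (\<integral>\<^sup>+x. ennreal (W (Suc k) (xs @ [x])) \<partial>measure_pmf D)
                   + ennreal (T (Suc k))"
    using measure_pmf.emeasure_space_1[of D] by (simp add: nn_integral_add nn_integral_cmult)
  also have "\<dots> \<le> ennreal (1 / P (Suc k)) * ennreal ((1 + a k) * W k xs + a k) + ennreal (T (Suc k))"
    using drift[of xs] unfolding k_def by (intro add_right_mono mult_left_mono) simp_all
  also have "\<dots> = ennreal (((1 + a k) * W k xs + a k) / (P k * (1 + a k)) + T (Suc k))"
    using P_ge_1[of "Suc k"] a_nonneg[of k] W_nonneg[of k xs] T_nonneg[of "Suc k"]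
    by (simp add: P_def ennreal_plus[symmetric] ennreal_mult[symmetric] del: ennreal_plus)
  also have "\<dots> \<le> ennreal (W k xs / P k + T k)"
    using a_nonneg[of k] P_ge_1[of k] T_Suc by (intro ennreal_leI normalized_drift_step) simp_all
  finally show "(\<integral>\<^sup>+x. ennreal (W (Suc (length xs)) (xs @ [x]) / (\<Prod>k<Suc (length xs). 1 + a k)
                    + (\<Sum>i. a (i + Suc (length xs)))) \<partial>measure_pmf D)
      \<le> ennreal (W (length xs) xs / (\<Prod>k<length xs. 1 + a k) + (\<Sum>i. a (i + length xs)))"
    by (simp add: k_def P_def T_def)
qed

lemma nn_integral_stake_drift_step:
  fixes D :: "'b::countable pmf" and W :: "nat \<Rightarrow> 'b list \<Rightarrow> real"
  assumes W_nonneg: "\<And>xs. 0 \<le> W n xs" and "0 \<le> \<alpha>" "0 \<le> \<beta>"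
    and drift: "\<And>xs. length xs = n \<Longrightarrow>
      (\<integral>\<^sup>+x. ennreal (W (Suc n) (xs @ [x])) \<partial>measure_pmf D) \<le> ennreal (\<alpha> * W n xs + \<beta>)"
  shows "(\<integral>\<^sup>+\<omega>. ennreal (W (Suc n) (stake (Suc n) \<omega>)) \<partial>stream_space (measure_pmf D))
     \<le> ennreal \<alpha> * (\<integral>\<^sup>+\<omega>. ennreal (W n (stake n \<omega>)) \<partial>stream_space (measure_pmf D)) + ennreal \<beta>"
proof -
  let ?S = "stream_space (measure_pmf D)"
  have "(\<integral>\<^sup>+\<omega>. ennreal (W (Suc n) (stake (Suc n) \<omega>)) \<partial>?S)
      = (\<integral>\<^sup>+\<omega>. (\<integral>\<^sup>+x. ennreal (W (Suc n) (stake n \<omega> @ [x])) \<partial>measure_pmf D) \<partial>?S)"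
    by (rule nn_integral_stake_Suc)
  also have "\<dots> \<le> (\<integral>\<^sup>+\<omega>. ennreal \<alpha> * ennreal (W n (stake n \<omega>)) + ennreal \<beta> \<partial>?S)"
    using drift W_nonneg \<open>0 \<le> \<alpha>\<close> \<open>0 \<le> \<beta>\<close>
    by (intro nn_integral_mono) (simp add: ennreal_mult[symmetric] ennreal_plus[symmetric] del: ennreal_plus)
  also have "\<dots> = ennreal \<alpha> * (\<integral>\<^sup>+\<omega>. ennreal (W n (stake n \<omega>)) \<partial>?S) + ennreal \<beta>"
    by (simp add: nn_integral_add nn_integral_cmult borel_measurable_stake_pmf)
  finally show ?thesis .
qed

lemma nn_integral_stake_tendsto_zero_of_drift:
  fixes D :: "'b::countable pmf" and W :: "nat \<Rightarrow> 'b list \<Rightarrow> real"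
  assumes W_nonneg: "\<And>n xs. 0 \<le> W n xs" and "0 < \<delta>" "\<delta> \<le> 1" "0 \<le> C"
    and lr: "\<And>n. 0 \<le> lr n" "\<And>n. lr n \<le> 1" "\<not> summable lr" "summable (\<lambda>n. (lr n)\<^sup>2)"
    and drift: "\<And>xs. (\<integral>\<^sup>+x. ennreal (W (Suc (length xs)) (xs @ [x])) \<partial>measure_pmf D)
      \<le> ennreal ((1 - \<delta> * lr (length xs)) * W (length xs) xs
                 + C * (lr (length xs))\<^sup>2 * (W (length xs) xs + 1))"
  shows "(\<lambda>n. \<integral>\<^sup>+\<omega>. ennreal (W n (stake n \<omega>)) \<partial>stream_space (measure_pmf D)) \<longlonglongrightarrow> 0"
proof -
  define ev where "ev n = (\<integral>\<^sup>+\<omega>. ennreal (W n (stake n \<omega>)) \<partial>stream_space (measure_pmf D))" for n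
  define \<alpha> where "\<alpha> n = 1 - \<delta> * lr n + C * (lr n)\<^sup>2" for n
  have \<alpha>_nonneg: "0 \<le> \<alpha> n" for n
    using mult_le_one[of \<delta> "lr n"] assms(2-4) lr(1,2)[of n] unfolding \<alpha>_def
    by (smt (verit) mult_nonneg_nonneg zero_le_power2)
  have ev_step: "ev (Suc n) \<le> ennreal (\<alpha> n) * ev n + ennreal (C * (lr n)\<^sup>2)" for n
    unfolding ev_def
  proof (rule nn_integral_stake_drift_step[OF W_nonneg \<alpha>_nonneg])
    fix xs :: "'b list"
    assume "length xs = n"
    then show "(\<integral>\<^sup>+x. ennreal (W (Suc n) (xs @ [x])) \<partial>measure_pmf D) \<le> ennreal (\<alpha> n * W n xs + C * (lr n)\<^sup>2)"
      using drift[of xs] by (simp add: \<alpha>_def algebra_simps)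
  qed (use \<open>0 \<le> C\<close> in simp)
  have ev_finite: "ev n < \<infinity>" for n
  proof (induction n)
    case 0
    show ?case
      by (simp add: ev_def)
  next
    case (Suc n)
    then show ?case
      using ev_step[of n] by (simp add: ennreal_mult_less_top order.strict_trans1)
  qed
  define e where "e n = enn2real (ev n)" for n
  have ev_e: "ev n = ennreal (e n)" and e_nonneg: "0 \<le> e n" for n
    unfolding e_def using ev_finite[of n] by simp_all
  have "e (Suc n) \<le> \<alpha> n * e n + C * (lr n)\<^sup>2" for n
    using ev_step[of n] \<alpha>_nonneg[of n] e_nonneg[of n] \<open>0 \<le> C\<close> unfolding ev_e
    by (simp add: ennreal_mult[symmetric] ennreal_plus[symmetric] del: ennreal_plus)
  then have "e \<longlonglongrightarrow> 0"
    using assms by (intro robbins_monro_recursion_tendsto_zero[where \<delta>=\<delta> and C=C and lr=lr])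
      (simp_all add: e_nonneg \<alpha>_def algebra_simps)
  then show ?thesis
    unfolding ev_def[symmetric] ev_e by (intro tendsto_ennrealI[of _ 0, simplified])
qed

lemma prod_one_plus_le_exp_suminf:
  fixes a :: "nat \<Rightarrow> real"
  assumes "\<And>k. 0 \<le> a k" and "summable a"
  shows "(\<Prod>k<n. 1 + a k) \<le> exp (\<Sum>k. a k)"
proof -
  have "(\<Prod>k<n. 1 + a k) \<le> (\<Prod>k<n. exp (a k))"
    using assms(1) by (intro prod_mono) (simp add: add.commute exp_ge_add_one_self)
  also have "\<dots> \<le> exp (\<Sum>k. a k)"
    using sum_le_suminf[OF assms(2), of "{..<n}"] assms(1) by (simp add: exp_sum[symmetric])
  finally show ?thesis .
qed

lemma tendsto_zero_of_normalized:
  fixes w P T :: "nat \<Rightarrow> real"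
  assumes w_nonneg: "\<And>n. 0 \<le> w n" and P: "\<And>n. 1 \<le> P n" "\<And>n. P n \<le> B" and T_nonneg: "\<And>n. 0 \<le> T n"
    and lim: "(\<lambda>n. ennreal (w n / P n + T n)) \<longlonglongrightarrow> 0"
  shows "w \<longlonglongrightarrow> 0"
proof -
  have wP_nonneg: "0 \<le> w n / P n" for n
    using w_nonneg[of n] P(1)[of n] by simp
  have "(\<lambda>n. w n / P n + T n) \<longlonglongrightarrow> 0"
    using lim wP_nonneg T_nonneg by (subst ennreal_tendsto_0_iff[symmetric]) (simp_all add: add_nonneg_nonneg)
  then have "(\<lambda>n. w n / P n) \<longlonglongrightarrow> 0"
    by (rule tendsto_sandwich[rotated 2, OF tendsto_const]) (simp_all add: wP_nonneg T_nonneg)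
  then have bound_lim: "(\<lambda>n. B * (w n / P n)) \<longlonglongrightarrow> 0"
    by (rule tendsto_mult_right_zero)
  have "w n \<le> B * (w n / P n)" for n
    using mult_right_mono[OF P(2)[of n] wP_nonneg[of n]] P(1)[of n] by simp
  then show ?thesis
    by (intro tendsto_sandwich[OF _ _ tendsto_const bound_lim]) (simp_all add: w_nonneg)
qed

lemma AE_tendsto_zero_of_drift:
  fixes D :: "'b::countable pmf" and W :: "nat \<Rightarrow> 'b list \<Rightarrow> real"
  assumes W_nonneg: "\<And>n xs. 0 \<le> W n xs" and "0 < \<delta>" "\<delta> \<le> 1" "0 \<le> C"
    and lr: "\<And>n. 0 \<le> lr n" "\<And>n. lr n \<le> 1" "\<not> summable lr" "summable (\<lambda>n. (lr n)\<^sup>2)"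
    and drift: "\<And>xs. (\<integral>\<^sup>+x. ennreal (W (Suc (length xs)) (xs @ [x])) \<partial>measure_pmf D)
      \<le> ennreal ((1 - \<delta> * lr (length xs)) * W (length xs) xs
                 + C * (lr (length xs))\<^sup>2 * (W (length xs) xs + 1))"
  shows "AE \<omega> in stream_space (measure_pmf D). (\<lambda>n. W n (stake n \<omega>)) \<longlonglongrightarrow> 0"
proof -
  let ?S = "stream_space (measure_pmf D)"
  define a where "a k = C * (lr k)\<^sup>2" for k
  define P where "P n = (\<Prod>k<n. 1 + a k)" for n
  define T where "T n = (\<Sum>i. a (i + n))" for n
  define X where "X n xs = ennreal (W n xs / P n + T n)" for n xs
  have a_nonneg: "0 \<le> a k" and a_summable: "summable a" for k
    unfolding a_def using \<open>0 \<le> C\<close> lr(4) by (simp_all add: summable_mult)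
  have P_ge_1: "1 \<le> P n" for n
    unfolding P_def using a_nonneg by (intro prod_ge_1) simp
  have P_bounded: "P n \<le> exp (\<Sum>k. a k)" for n
    unfolding P_def by (rule prod_one_plus_le_exp_suminf[OF a_nonneg a_summable])
  have T_nonneg: "0 \<le> T n" for n
    unfolding T_def using a_nonneg by (intro suminf_nonneg summable_ignore_initial_segment a_summable)
  have "prefix_supermartingale D X"
    unfolding X_def P_def T_def
  proof (rule prefix_supermartingale_robbins_siegmund[OF W_nonneg a_nonneg a_summable])
    fix xs :: "'b list"
    let ?k = "length xs"
    have "(1 - \<delta> * lr ?k) * W ?k xs + C * (lr ?k)\<^sup>2 * (W ?k xs + 1) \<le> (1 + a ?k) * W ?k xs + a ?k"
      using mult_nonneg_nonneg[of "\<delta> * lr ?k" "W ?k xs"] \<open>0 < \<delta>\<close> lr(1)[of ?k] W_nonneg[of ?k xs]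
      unfolding a_def by (simp add: algebra_simps)
    then show "(\<integral>\<^sup>+x. ennreal (W (Suc ?k) (xs @ [x])) \<partial>measure_pmf D) \<le> ennreal ((1 + a ?k) * W ?k xs + a ?k)"
      by (rule order_trans[OF drift[of xs] ennreal_leI])
  qed
  moreover have "(\<lambda>n. \<integral>\<^sup>+\<omega>. X n (stake n \<omega>) \<partial>?S) \<longlonglongrightarrow> 0"
  proof (rule tendsto_sandwich[OF _ _ tendsto_const])
    have "(\<integral>\<^sup>+\<omega>. X n (stake n \<omega>) \<partial>?S) \<le> (\<integral>\<^sup>+\<omega>. ennreal (W n (stake n \<omega>)) + ennreal (T n) \<partial>?S)" for n
      using P_ge_1[of n] W_nonneg T_nonneg[of n] divide_left_mono[OF P_ge_1[of n] W_nonneg, of n] unfolding X_def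
      by (intro nn_integral_mono) (simp add: ennreal_plus[symmetric] del: ennreal_plus)
    also have "\<dots> n = (\<integral>\<^sup>+\<omega>. ennreal (W n (stake n \<omega>)) \<partial>?S) + ennreal (T n)" for n
      by (simp add: nn_integral_add borel_measurable_stake_pmf)
    finally show "\<forall>\<^sub>F n in sequentially. (\<integral>\<^sup>+\<omega>. X n (stake n \<omega>) \<partial>?S) \<le> \<dots> n"
      by simp
    have "(\<lambda>n. \<integral>\<^sup>+\<omega>. ennreal (W n (stake n \<omega>)) \<partial>?S) \<longlonglongrightarrow> 0"
      using assms by (rule nn_integral_stake_tendsto_zero_of_drift)
    moreover have "(\<lambda>n. ennreal (T n)) \<longlonglongrightarrow> 0"
      unfolding T_def by (intro tendsto_ennrealI[of _ 0, simplified] suminf_exist_split2 a_summable)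
    ultimately show "(\<lambda>n. (\<integral>\<^sup>+\<omega>. ennreal (W n (stake n \<omega>)) \<partial>?S) + ennreal (T n)) \<longlonglongrightarrow> 0"
      using tendsto_add[of _ 0 _ _ 0] by simp
  qed simp
  ultimately have "AE \<omega> in ?S. (\<lambda>n. X n (stake n \<omega>)) \<longlonglongrightarrow> 0"
    by (rule AE_tendsto_zero_prefix_supermartingale)
  then show ?thesis
  proof (rule AE_mp, intro AE_I2 impI)
    fix \<omega> :: "'b stream"
    assume "(\<lambda>n. X n (stake n \<omega>)) \<longlonglongrightarrow> 0"
    then show "(\<lambda>n. W n (stake n \<omega>)) \<longlonglongrightarrow> 0"
      unfolding X_def
      by (intro tendsto_zero_of_normalized[where P=P and T=T and B="exp (\<Sum>k. a k)"])
        (simp_all add: W_nonneg P_ge_1 T_nonneg P_bounded)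
  qed
qed

definition ones_row_power :: "('a::finite \<Rightarrow> 'a \<Rightarrow> real) \<Rightarrow> nat \<Rightarrow> 'a \<Rightarrow> real" where
  "ones_row_power M k = ((\<lambda>u r. \<Sum>q\<in>UNIV. u q * M q r) ^^ k) (\<lambda>_. 1)"

lemma ones_row_power_0 [simp]: "ones_row_power M 0 r = 1"
  and ones_row_power_Suc: "ones_row_power M (Suc k) r = (\<Sum>q\<in>UNIV. ones_row_power M k q * M q r)"
  by (simp_all add: ones_row_power_def)

lemma ones_row_power_nonneg: "(\<And>q r. 0 \<le> M q r) \<Longrightarrow> 0 \<le> ones_row_power M k r"
  by (induction k arbitrary: r) (auto simp: ones_row_power_Suc intro!: sum_nonneg mult_nonneg_nonneg)

lemma exists_contraction_factor:
  fixes M :: "'a::finite \<Rightarrow> 'a \<Rightarrow> real" and s :: "'a \<Rightarrow> real"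
  assumes M_nonneg: "\<And>q r. 0 \<le> M q r" and s_pos: "\<And>q. 0 < s q"
    and Ms_less: "\<And>q. (\<Sum>r\<in>UNIV. M q r * s r) < s q"
  obtains \<rho> where "0 \<le> \<rho>" "\<rho> < 1" and "\<And>q. (\<Sum>r\<in>UNIV. M q r * s r) \<le> \<rho> * s q"
proof
  define \<rho> where "\<rho> = Max (range (\<lambda>q. (\<Sum>r\<in>UNIV. M q r * s r) / s q))"
  have "\<rho> \<in> range (\<lambda>q. (\<Sum>r\<in>UNIV. M q r * s r) / s q)"
    unfolding \<rho>_def by (rule Max_in) auto
  then obtain q0 where q0: "\<rho> = (\<Sum>r\<in>UNIV. M q0 r * s r) / s q0"
    by blast
  then show "\<rho> < 1"
    using Ms_less[of q0] s_pos[of q0] by simp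
  show "0 \<le> \<rho>"
    unfolding q0 using M_nonneg s_pos
    by (intro divide_nonneg_pos sum_nonneg mult_nonneg_nonneg) (simp_all add: less_imp_le)
  show "(\<Sum>r\<in>UNIV. M q r * s r) \<le> \<rho> * s q" for q
  proof -
    have "(\<Sum>r\<in>UNIV. M q r * s r) / s q \<le> \<rho>"
      unfolding \<rho>_def by (rule Max_ge) auto
    then show ?thesis
      using s_pos[of q] by (simp add: pos_divide_le_eq)
  qed
qed

lemma ones_row_power_decay:
  fixes M :: "'a::finite \<Rightarrow> 'a \<Rightarrow> real" and s :: "'a \<Rightarrow> real"
  assumes M_nonneg: "\<And>q r. 0 \<le> M q r" and "0 \<le> \<rho>" and Ms_le: "\<And>q. (\<Sum>r\<in>UNIV. M q r * s r) \<le> \<rho> * s q"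
  shows "(\<Sum>r\<in>UNIV. ones_row_power M k r * s r) \<le> \<rho> ^ k * (\<Sum>r\<in>UNIV. s r)"
proof (induction k)
  case (Suc k)
  have "(\<Sum>r\<in>UNIV. ones_row_power M (Suc k) r * s r)
      = (\<Sum>q\<in>UNIV. ones_row_power M k q * (\<Sum>r\<in>UNIV. M q r * s r))"
    unfolding ones_row_power_Suc
    by (simp add: sum_distrib_left sum_distrib_right mult.assoc) (rule sum.swap)
  also have "\<dots> \<le> (\<Sum>q\<in>UNIV. ones_row_power M k q * (\<rho> * s q))"
    by (intro sum_mono mult_left_mono Ms_le ones_row_power_nonneg M_nonneg)
  also have "\<dots> = \<rho> * (\<Sum>q\<in>UNIV. ones_row_power M k q * s q)"
    by (simp add: sum_distrib_left algebra_simps)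
  also have "\<dots> \<le> \<rho> ^ Suc k * (\<Sum>r\<in>UNIV. s r)"
    using mult_left_mono[OF Suc \<open>0 \<le> \<rho>\<close>] by simp
  finally show ?case .
qed simp

lemma ones_row_power_eventually_le_one:
  fixes M :: "'a::finite \<Rightarrow> 'a \<Rightarrow> real" and s :: "'a \<Rightarrow> real"
  assumes M_nonneg: "\<And>q r. 0 \<le> M q r" and s_pos: "\<And>q. 0 < s q"
    and "\<And>q. (\<Sum>r\<in>UNIV. M q r * s r) < s q"
  obtains N where "\<And>r. ones_row_power M (Suc N) r \<le> 1"
proof -
  obtain \<rho> where "0 \<le> \<rho>" "\<rho> < 1" and Ms_le: "\<And>q. (\<Sum>r\<in>UNIV. M q r * s r) \<le> \<rho> * s q"
    using exists_contraction_factor[OF assms] by blast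
  define m where "m = Min (range s)"
  have "0 < m" and m_le: "m \<le> s r" for r
    unfolding m_def using s_pos by (auto simp: Min_gr_iff)
  have "0 < (\<Sum>r\<in>UNIV. s r)"
    using s_pos by (intro sum_pos) auto
  moreover have "(\<lambda>n. \<rho> ^ n) \<longlonglongrightarrow> 0"
    using \<open>\<rho> < 1\<close> \<open>0 \<le> \<rho>\<close> by (intro LIMSEQ_power_zero) simp
  ultimately have "\<forall>\<^sub>F n in sequentially. \<rho> ^ n < m / (\<Sum>r\<in>UNIV. s r)"
    using \<open>0 < m\<close> by (intro order_tendstoD(2)) (auto intro: divide_pos_pos)
  then obtain N where N: "\<rho> ^ Suc N < m / (\<Sum>r\<in>UNIV. s r)"
    unfolding eventually_sequentially by (meson le_SucI order_refl)
  have "ones_row_power M (Suc N) r \<le> 1" for r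
  proof -
    have "ones_row_power M (Suc N) r * s r \<le> (\<Sum>r\<in>UNIV. ones_row_power M (Suc N) r * s r)"
      by (rule member_le_sum) (auto intro!: mult_nonneg_nonneg ones_row_power_nonneg M_nonneg less_imp_le[OF s_pos])
    also have "\<dots> \<le> \<rho> ^ Suc N * (\<Sum>r\<in>UNIV. s r)"
      by (rule ones_row_power_decay[OF M_nonneg \<open>0 \<le> \<rho>\<close> Ms_le])
    also have "\<dots> \<le> m"
      using N \<open>0 < (\<Sum>r\<in>UNIV. s r)\<close> by (simp add: pos_less_divide_eq less_imp_le)
    also have "\<dots> \<le> s r"
      by (rule m_le)
    finally show ?thesis
      using s_pos[of r] by simp
  qed
  then show ?thesis
    using that by blast
qed

lemma exists_subinvariant_weights:
  fixes M :: "'a::finite \<Rightarrow> 'a \<Rightarrow> real" and s :: "'a \<Rightarrow> real"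
  assumes M_nonneg: "\<And>q r. 0 \<le> M q r" and "\<And>q. 0 < s q"
    and "\<And>q. (\<Sum>r\<in>UNIV. M q r * s r) < s q"
  obtains y where "\<And>q. 1 \<le> y q" and "\<And>r. (\<Sum>q\<in>UNIV. y q * M q r) \<le> y r"
proof -
  obtain N where N: "\<And>r. ones_row_power M (Suc N) r \<le> 1"
    using ones_row_power_eventually_le_one[OF assms] by blast
  \<comment> \<open>a truncated Neumann series \<open>1\<^sup>T (I + M + \<dots> + M\<^sup>N)\<close>\<close>
  define y where "y r = (\<Sum>k<Suc N. ones_row_power M k r)" for r
  have "1 \<le> y r" for r
    unfolding y_def sum.lessThan_Suc_shift using M_nonneg
    by (simp add: sum_nonneg ones_row_power_nonneg)
  moreover have "(\<Sum>q\<in>UNIV. y q * M q r) \<le> y r" for r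
  proof -
    have "(\<Sum>q\<in>UNIV. y q * M q r) = (\<Sum>k<Suc N. ones_row_power M (Suc k) r)"
      unfolding y_def ones_row_power_Suc sum_distrib_right by (rule sum.swap)
    also have "\<dots> \<le> (\<Sum>k<N. ones_row_power M (Suc k) r) + ones_row_power M 0 r"
      using N[of r] by simp
    also have "\<dots> = y r"
      unfolding y_def sum.lessThan_Suc_shift by simp
    finally show ?thesis .
  qed
  ultimately show ?thesis
    using that by blast
qed

lemma quadratic_form_le_subinvariant:
  fixes M :: "'a::finite \<Rightarrow> 'a \<Rightarrow> real" and s y E :: "'a \<Rightarrow> real"
  assumes M_nonneg: "\<And>q r. 0 \<le> M q r" and s_pos: "\<And>q. 0 < s q" and y_nonneg: "\<And>q. 0 \<le> y q"
    and y_subinvariant: "\<And>r. (\<Sum>q\<in>UNIV. y q * M q r) \<le> y r"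
  shows "(\<Sum>q\<in>UNIV. y q / s q * E q * (\<Sum>r\<in>UNIV. M q r * E r)) - (\<Sum>q\<in>UNIV. y q / s q * (E q)\<^sup>2)
     \<le> - (\<Sum>q\<in>UNIV. y q * (s q - (\<Sum>r\<in>UNIV. M q r * s r)) / (2 * (s q)\<^sup>2) * (E q)\<^sup>2)"
proof -
  define z where "z q = E q / s q" for q
  have E_z: "E q = s q * z q" for q
    unfolding z_def using s_pos[of q] by simp
  define Ms where "Ms q = (\<Sum>r\<in>UNIV. M q r * s r)" for q
  have "(\<Sum>q\<in>UNIV. y q / s q * E q * (\<Sum>r\<in>UNIV. M q r * E r))
      = (\<Sum>q\<in>UNIV. \<Sum>r\<in>UNIV. (y q * M q r * s r) * (z q * z r))"
  proof -
    have "y q / s q * E q * (M q r * E r) = (y q * M q r * s r) * (z q * z r)" for q r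
      unfolding E_z using s_pos[of q] by (simp add: field_simps)
    then show ?thesis
      by (simp add: sum_distrib_left)
  qed
  also have "\<dots> \<le> (\<Sum>q\<in>UNIV. \<Sum>r\<in>UNIV. (y q * M q r * s r) * ((z q)\<^sup>2 / 2 + (z r)\<^sup>2 / 2))"
  proof (intro sum_mono mult_left_mono)
    fix q r
    show "z q * z r \<le> (z q)\<^sup>2 / 2 + (z r)\<^sup>2 / 2"
      using zero_le_power2[of "z q - z r"] by (simp add: power2_diff)
    show "0 \<le> y q * M q r * s r"
      using y_nonneg[of q] M_nonneg[of q r] s_pos[of r] by simp
  qed
  also have "\<dots> = (\<Sum>q\<in>UNIV. y q * (z q)\<^sup>2 / 2 * Ms q) + (\<Sum>r\<in>UNIV. s r * (z r)\<^sup>2 / 2 * (\<Sum>q\<in>UNIV. y q * M q r))"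
    unfolding Ms_def distrib_left sum.distrib
    by (subst (2) sum.swap) (simp add: sum_distrib_left sum_divide_distrib mult_ac)
  also have "\<dots> \<le> (\<Sum>q\<in>UNIV. y q * (z q)\<^sup>2 / 2 * Ms q) + (\<Sum>r\<in>UNIV. s r * (z r)\<^sup>2 / 2 * y r)"
    using s_pos by (intro add_left_mono sum_mono mult_left_mono y_subinvariant) (simp add: less_imp_le)
  also have "\<dots> = (\<Sum>q\<in>UNIV. y q / s q * (E q)\<^sup>2) - (\<Sum>q\<in>UNIV. y q * (s q - Ms q) / (2 * (s q)\<^sup>2) * (E q)\<^sup>2)"
  proof -
    have "y q * (z q)\<^sup>2 / 2 * Ms q + s q * (z q)\<^sup>2 / 2 * y q
        = y q / s q * (E q)\<^sup>2 - y q * (s q - Ms q) / (2 * (s q)\<^sup>2) * (E q)\<^sup>2" for q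
      unfolding E_z using s_pos[of q] by (simp add: field_simps power2_eq_square)
    then show ?thesis
      by (simp add: sum.distrib[symmetric] sum_subtractf[symmetric])
  qed
  finally show ?thesis
    unfolding Ms_def by simp
qed

lemma sum_nth_eq_sum_count_list:
  fixes f :: "'a::finite \<Rightarrow> 'b::comm_semiring_1"
  shows "(\<Sum>i<length xs. f (xs ! i)) = (\<Sum>x\<in>UNIV. of_nat (count_list xs x) * f x)"
proof (induction xs)
  case (Cons a xs)
  have "of_nat (count_list (a # xs) x) * f x = of_nat (count_list xs x) * f x + (if a = x then f x else 0)"
    for x
    by (simp add: algebra_simps)
  then have "(\<Sum>x\<in>UNIV. of_nat (count_list (a # xs) x) * f x)
      = (\<Sum>x\<in>UNIV. of_nat (count_list xs x) * f x) + (\<Sum>x\<in>UNIV. if a = x then f x else 0)"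
    by (simp add: sum.distrib)
  then show ?case
    using Cons by (simp add: sum.lessThan_Suc_shift add.commute del: sum.lessThan_Suc)
qed simp

definition qlearn_step :: "('a \<Rightarrow> real) \<Rightarrow> real \<Rightarrow> ('a \<Rightarrow> real) \<Rightarrow> 'a \<times> 'a list \<Rightarrow> 'a \<Rightarrow> real" where
  "qlearn_step c l Q x =
     Q(fst x := (1 - l) * Q (fst x) + l * (c (fst x) + (\<Sum>j<length (snd x). Q (snd x ! j))))"

lemma Qlearn_Suc_qlearn_step: "Qlearn lr c Q0 \<omega> (Suc i) = qlearn_step c (lr i) (Qlearn lr c Q0 \<omega> i) (\<omega> !! i)"
  by (simp add: qlearn_step_def Let_def)

locale bmc_qlearning =
  fixes p :: "'a::finite \<Rightarrow> 'a list pmf" and c :: "'a \<Rightarrow> real" and sel :: "'a pmf"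
  assumes bmc: "bmc p c" and cstar_finite: "\<And>q. cstar p c q < \<infinity>" and sel_pos: "\<And>q. 0 < pmf sel q"
begin

lemma finite_offspring: "finite (set_pmf (p q))" and cost_pos: "0 < c q"
  using bmc unfolding bmc_def by auto

definition c_star :: "'a \<Rightarrow> real" where
  "c_star q = enn2real (cstar p c q)"

definition mean_offspring :: "'a \<Rightarrow> 'a \<Rightarrow> real" where
  "mean_offspring q r = (\<Sum>\<alpha>\<in>set_pmf (p q). pmf (p q) \<alpha> * of_nat (count_list \<alpha> r))"

lemma mean_offspring_nonneg: "0 \<le> mean_offspring q r"
  unfolding mean_offspring_def by (intro sum_nonneg) simp

lemma sum_offspring_eq_mean_offspring:
  "(\<Sum>\<alpha>\<in>set_pmf (p q). pmf (p q) \<alpha> * (\<Sum>i<length \<alpha>. f (\<alpha> ! i))) = (\<Sum>r\<in>UNIV. mean_offspring q r * f r)"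
  unfolding sum_nth_eq_sum_count_list mean_offspring_def sum_distrib_left sum_distrib_right mult.assoc
  by (rule sum.swap)

lemma c_star_nonneg: "0 \<le> c_star q"
  by (simp add: c_star_def)

lemma cstar_eq_c_star: "cstar p c = (\<lambda>q. ennreal (c_star q))"
  using cstar_finite by (simp add: c_star_def fun_eq_iff)

lemma c_star_eq: "c_star q = c q + (\<Sum>r\<in>UNIV. mean_offspring q r * c_star r)"
proof -
  have "mono (bmc_F p c)"
    unfolding mono_def le_fun_def bmc_F_def by (auto intro!: add_left_mono sum_mono mult_left_mono)
  then have "cstar p c q = bmc_F p c (cstar p c) q"
    unfolding cstar_def by (metis lfp_unfold)
  also have "\<dots> = ennreal (c q) + (\<Sum>\<alpha>\<in>set_pmf (p q). ennreal (pmf (p q) \<alpha> * (\<Sum>i<length \<alpha>. c_star (\<alpha> ! i))))"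
    using c_star_nonneg by (simp add: bmc_F_def cstar_eq_c_star sum_ennreal ennreal_mult sum_nonneg)
  also have "\<dots> = ennreal (c q + (\<Sum>\<alpha>\<in>set_pmf (p q). pmf (p q) \<alpha> * (\<Sum>i<length \<alpha>. c_star (\<alpha> ! i))))"
    using cost_pos[of q] c_star_nonneg
    by (simp add: sum_ennreal sum_nonneg ennreal_plus[symmetric] del: ennreal_plus)
  finally have "ennreal (c_star q) = ennreal (c q + (\<Sum>r\<in>UNIV. mean_offspring q r * c_star r))"
    by (simp add: cstar_eq_c_star sum_offspring_eq_mean_offspring)
  moreover have "0 \<le> c q + (\<Sum>r\<in>UNIV. mean_offspring q r * c_star r)"
    using cost_pos[of q] c_star_nonneg mean_offspring_nonneg
    by (intro add_nonneg_nonneg sum_nonneg mult_nonneg_nonneg) (simp_all add: less_imp_le)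
  ultimately show ?thesis
    using c_star_nonneg[of q] by simp
qed

lemma c_star_pos: "0 < c_star q"
  using c_star_eq[of q] cost_pos[of q] mean_offspring_nonneg c_star_nonneg
  by (smt (verit) mult_nonneg_nonneg sum_nonneg)

lemma c_star_gt_mean_offspring: "(\<Sum>r\<in>UNIV. mean_offspring q r * c_star r) < c_star q"
  using c_star_eq[of q] cost_pos[of q] by linarith

definition lyap :: "('a \<Rightarrow> real) \<Rightarrow> ('a \<Rightarrow> real) \<Rightarrow> real" where
  "lyap y Q = (\<Sum>q\<in>UNIV. y q / (c_star q * pmf sel q) * (Q q - c_star q)\<^sup>2)"

definition step_mean :: "('a \<times> 'a list \<Rightarrow> real) \<Rightarrow> real" where
  "step_mean f = (\<Sum>q\<in>UNIV. pmf sel q * (\<Sum>\<beta>\<in>set_pmf (p q). pmf (p q) \<beta> * f (q, \<beta>)))"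

lemma nn_integral_step_dist:
  assumes "\<And>x. 0 \<le> f x"
  shows "(\<integral>\<^sup>+x. ennreal (f x) \<partial>measure_pmf (step_dist sel p)) = ennreal (step_mean f)"
proof -
  have "set_pmf sel = UNIV"
    using sel_pos by (auto simp: set_pmf_iff less_imp_neq[symmetric])
  moreover have "(\<integral>\<^sup>+\<beta>. ennreal (f (q, \<beta>)) \<partial>measure_pmf (p q))
      = ennreal (\<Sum>\<beta>\<in>set_pmf (p q). pmf (p q) \<beta> * f (q, \<beta>))" for q
    using assms by (subst nn_integral_measure_pmf_finite[OF finite_offspring])
      (simp_all add: ennreal_mult[symmetric] mult.commute)
  ultimately show ?thesis
    using assms unfolding step_dist_def step_mean_def
    by (simp add: nn_integral_measure_pmf_finite ennreal_mult[symmetric] mult.commute sum_nonneg)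
qed

lemma lyap_nonneg: "(\<And>q. 0 \<le> y q) \<Longrightarrow> 0 \<le> lyap y Q"
  unfolding lyap_def using c_star_pos sel_pos by (intro sum_nonneg) (simp add: less_imp_le)

lemma lyap_term_le:
  assumes "\<And>q. 0 \<le> y q"
  shows "y q / (c_star q * pmf sel q) * (Q q - c_star q)\<^sup>2 \<le> lyap y Q"
  unfolding lyap_def using assms c_star_pos sel_pos
  by (intro member_le_sum[of q UNIV "\<lambda>q. y q / (c_star q * pmf sel q) * (Q q - c_star q)\<^sup>2"])
    (simp_all add: less_imp_le)

lemma lyap_fun_upd:
  "lyap y (Q(q := a)) = lyap y Q + y q / (c_star q * pmf sel q) * ((a - c_star q)\<^sup>2 - (Q q - c_star q)\<^sup>2)"
proof -
  have "lyap y (Q(q := a)) = y q / (c_star q * pmf sel q) * (a - c_star q)\<^sup>2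
      + (\<Sum>r\<in>UNIV - {q}. y r / (c_star r * pmf sel r) * (Q r - c_star r)\<^sup>2)"
    unfolding lyap_def by (subst sum.remove[of UNIV q]) (auto intro!: sum.cong)
  moreover have "lyap y Q = y q / (c_star q * pmf sel q) * (Q q - c_star q)\<^sup>2
      + (\<Sum>r\<in>UNIV - {q}. y r / (c_star r * pmf sel r) * (Q r - c_star r)\<^sup>2)"
    unfolding lyap_def by (subst sum.remove[of UNIV q]) auto
  ultimately show ?thesis
    by (simp add: algebra_simps)
qed

lemma sum_pmf_offspring: "(\<Sum>\<beta>\<in>set_pmf (p q). pmf (p q) \<beta>) = 1"
  by (rule sum_pmf_eq_1) (simp_all add: finite_offspring)

definition td_error :: "('a \<Rightarrow> real) \<Rightarrow> 'a \<Rightarrow> 'a list \<Rightarrow> real" where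
  "td_error Q q \<beta> = c q + (\<Sum>j<length \<beta>. Q (\<beta> ! j)) - Q q"

lemma mean_td_error:
  "(\<Sum>\<beta>\<in>set_pmf (p q). pmf (p q) \<beta> * td_error Q q \<beta>)
     = (\<Sum>r\<in>UNIV. mean_offspring q r * (Q r - c_star r)) - (Q q - c_star q)"
proof -
  have "pmf (p q) \<beta> * td_error Q q \<beta>
      = pmf (p q) \<beta> * (c q - Q q) + pmf (p q) \<beta> * (\<Sum>j<length \<beta>. Q (\<beta> ! j))" for \<beta>
    by (simp add: td_error_def algebra_simps)
  then have "(\<Sum>\<beta>\<in>set_pmf (p q). pmf (p q) \<beta> * td_error Q q \<beta>)
      = (\<Sum>\<beta>\<in>set_pmf (p q). pmf (p q) \<beta>) * (c q - Q q)
        + (\<Sum>\<beta>\<in>set_pmf (p q). pmf (p q) \<beta> * (\<Sum>j<length \<beta>. Q (\<beta> ! j)))"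
    by (simp only: sum.distrib sum_distrib_right)
  also have "\<dots> = (\<Sum>r\<in>UNIV. mean_offspring q r * (Q r - c_star r)) - (Q q - c_star q)"
    using c_star_eq[of q]
    by (simp add: sum_pmf_offspring sum_offspring_eq_mean_offspring algebra_simps sum_subtractf)
  finally show ?thesis .
qed

lemma lyap_qlearn_step:
  "lyap y (qlearn_step c l Q (q, \<beta>)) = lyap y Q + y q / (c_star q * pmf sel q)
     * (2 * l * (Q q - c_star q) * td_error Q q \<beta> + l\<^sup>2 * (td_error Q q \<beta>)\<^sup>2)"
proof -
  have "((1 - l) * Q q + l * (c q + (\<Sum>j<length \<beta>. Q (\<beta> ! j))) - c_star q)\<^sup>2 - (Q q - c_star q)\<^sup>2
      = 2 * l * (Q q - c_star q) * td_error Q q \<beta> + l\<^sup>2 * (td_error Q q \<beta>)\<^sup>2"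
    by (simp add: td_error_def power2_eq_square algebra_simps)
  then show ?thesis
    by (simp add: qlearn_step_def lyap_fun_upd)
qed

lemma target_error_sq_bound:
  obtains A B where "0 \<le> A" "0 \<le> B"
    and "\<And>Q q \<beta>. \<beta> \<in> set_pmf (p q) \<Longrightarrow> (td_error Q q \<beta>)\<^sup>2 \<le> A * (\<Sum>r\<in>UNIV. (Q r - c_star r)\<^sup>2) + B"
proof
  define L where "L = (\<Sum>q\<in>UNIV. \<Sum>\<beta>\<in>set_pmf (p q). real (length \<beta>))"
  define B0 where "B0 = (\<Sum>q\<in>UNIV. \<Sum>\<beta>\<in>set_pmf (p q). \<bar>c q + (\<Sum>j<length \<beta>. c_star (\<beta> ! j)) - c_star q\<bar>)"
  have le_double_sum: "g q \<beta> \<le> (\<Sum>q\<in>UNIV. \<Sum>\<beta>\<in>set_pmf (p q). g q \<beta>)"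
    if "\<beta> \<in> set_pmf (p q)" "\<And>q \<beta>. 0 \<le> g q \<beta>" for g :: "'a \<Rightarrow> 'a list \<Rightarrow> real" and q \<beta>
    using that finite_offspring
    by (intro order_trans[OF member_le_sum[of \<beta>] member_le_sum[of q]]) (auto intro: sum_nonneg)
  have "0 \<le> L" "0 \<le> B0"
    unfolding L_def B0_def by (auto intro!: sum_nonneg)
  then show "0 \<le> 2 * (L + 1)\<^sup>2" "0 \<le> 2 * B0\<^sup>2"
    by simp_all
  fix Q q \<beta>
  assume \<beta>: "\<beta> \<in> set_pmf (p q)"
  define E where "E r = Q r - c_star r" for r
  define s where "s = sqrt (\<Sum>r\<in>UNIV. (E r)\<^sup>2)"
  have "\<bar>E r\<bar> \<le> s" for r
    unfolding s_def using real_sqrt_le_mono[OF member_le_sum[of r UNIV "\<lambda>r. (E r)\<^sup>2"]] by simp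
  have "\<bar>\<Sum>j<length \<beta>. E (\<beta> ! j)\<bar> \<le> (\<Sum>j<length \<beta>. \<bar>E (\<beta> ! j)\<bar>)"
    by (rule sum_abs)
  also have "\<dots> \<le> real (length \<beta>) * s"
    using sum_bounded_above[of "{..<length \<beta>}" "\<lambda>j. \<bar>E (\<beta> ! j)\<bar>" s] \<open>\<And>r. \<bar>E r\<bar> \<le> s\<close> by simp
  also have "\<dots> \<le> L * s"
    unfolding L_def using \<beta> s_def by (intro mult_right_mono le_double_sum) (simp_all add: sum_nonneg)
  finally have "\<bar>td_error Q q \<beta>\<bar> \<le> B0 + (L + 1) * s"
    using le_double_sum[OF \<beta>, of "\<lambda>q \<beta>. \<bar>c q + (\<Sum>j<length \<beta>. c_star (\<beta> ! j)) - c_star q\<bar>"]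
      \<open>\<bar>E q\<bar> \<le> s\<close> unfolding B0_def E_def td_error_def by (simp add: sum_subtractf algebra_simps)
  then have "(td_error Q q \<beta>)\<^sup>2 \<le> (B0 + (L + 1) * s)\<^sup>2"
    by (rule power2_le_iff_abs_le[THEN iffD2, rotated])
      (simp add: \<open>0 \<le> L\<close> \<open>0 \<le> B0\<close> s_def sum_nonneg add_nonneg_nonneg)
  also have "\<dots> \<le> 2 * ((L + 1) * s)\<^sup>2 + 2 * B0\<^sup>2"
    using zero_le_power2[of "B0 - (L + 1) * s"] unfolding power2_sum power2_diff by linarith
  finally show "(td_error Q q \<beta>)\<^sup>2 \<le> 2 * (L + 1)\<^sup>2 * (\<Sum>r\<in>UNIV. (Q r - c_star r)\<^sup>2) + 2 * B0\<^sup>2"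
    by (simp add: s_def E_def sum_nonneg power_mult_distrib)
qed

lemma mean_lyap_increment_le:
  assumes "0 \<le> l"
    and noise: "\<And>\<beta>. \<beta> \<in> set_pmf (p q) \<Longrightarrow> (td_error Q q \<beta>)\<^sup>2 \<le> K"
  shows "(\<Sum>\<beta>\<in>set_pmf (p q). pmf (p q) \<beta> *
           (2 * l * (Q q - c_star q) * td_error Q q \<beta> + l\<^sup>2 * (td_error Q q \<beta>)\<^sup>2))
    \<le> 2 * l * (Q q - c_star q) * ((\<Sum>r\<in>UNIV. mean_offspring q r * (Q r - c_star r)) - (Q q - c_star q))
       + l\<^sup>2 * K"
proof -
  have "(\<Sum>\<beta>\<in>set_pmf (p q). pmf (p q) \<beta> * (td_error Q q \<beta>)\<^sup>2) \<le> (\<Sum>\<beta>\<in>set_pmf (p q). pmf (p q) \<beta> * K)"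
    using noise by (intro sum_mono mult_left_mono) simp_all
  then have "l\<^sup>2 * (\<Sum>\<beta>\<in>set_pmf (p q). pmf (p q) \<beta> * (td_error Q q \<beta>)\<^sup>2) \<le> l\<^sup>2 * K"
    by (simp add: mult_left_mono sum_distrib_right[symmetric] sum_pmf_offspring)
  moreover have "(\<Sum>\<beta>\<in>set_pmf (p q). pmf (p q) \<beta> *
           (2 * l * (Q q - c_star q) * td_error Q q \<beta> + l\<^sup>2 * (td_error Q q \<beta>)\<^sup>2))
      = 2 * l * (Q q - c_star q) * (\<Sum>\<beta>\<in>set_pmf (p q). pmf (p q) \<beta> * td_error Q q \<beta>)
        + l\<^sup>2 * (\<Sum>\<beta>\<in>set_pmf (p q). pmf (p q) \<beta> * (td_error Q q \<beta>)\<^sup>2)"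
    by (simp add: distrib_left sum.distrib sum_distrib_left mult_ac)
  ultimately show ?thesis
    by (simp add: mean_td_error)
qed

lemma step_mean_lyap_le:
  fixes Q y :: "'a \<Rightarrow> real"
  assumes "0 \<le> l" and y_nonneg: "\<And>q. 0 \<le> y q"
    and noise: "\<And>q \<beta>. \<beta> \<in> set_pmf (p q) \<Longrightarrow> (td_error Q q \<beta>)\<^sup>2 \<le> K"
  defines "E r \<equiv> Q r - c_star r"
  shows "step_mean (\<lambda>x. lyap y (qlearn_step c l Q x))
    \<le> lyap y Q + 2 * l * ((\<Sum>q\<in>UNIV. y q / c_star q * E q * (\<Sum>r\<in>UNIV. mean_offspring q r * E r))
                          - (\<Sum>q\<in>UNIV. y q / c_star q * (E q)\<^sup>2))
       + l\<^sup>2 * K * (\<Sum>q\<in>UNIV. y q / c_star q)"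
proof -
  define G where "G q = (\<Sum>\<beta>\<in>set_pmf (p q). pmf (p q) \<beta> *
    (2 * l * E q * td_error Q q \<beta> + l\<^sup>2 * (td_error Q q \<beta>)\<^sup>2))" for q
  have "step_mean (\<lambda>x. lyap y (qlearn_step c l Q x))
      = (\<Sum>q\<in>UNIV. pmf sel q * (lyap y Q + y q / (c_star q * pmf sel q) * G q))"
    unfolding step_mean_def G_def lyap_qlearn_step E_def
    by (simp add: distrib_left sum.distrib sum_distrib_left sum_distrib_right[symmetric] sum_pmf_offspring mult_ac)
  also have "\<dots> = lyap y Q + (\<Sum>q\<in>UNIV. y q / c_star q * G q)"
  proof -
    have "pmf sel q * (lyap y Q + y q / (c_star q * pmf sel q) * G q) = pmf sel q * lyap y Q + y q / c_star q * G q"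
      for q
      using sel_pos[of q] by (simp add: field_simps)
    then show ?thesis
      by (simp add: sum.distrib sum_distrib_right[symmetric] sum_pmf_eq_1)
  qed
  also have "\<dots> \<le> lyap y Q + (\<Sum>q\<in>UNIV. y q / c_star q *
                    (2 * l * E q * ((\<Sum>r\<in>UNIV. mean_offspring q r * E r) - E q) + l\<^sup>2 * K))"
    unfolding G_def E_def using y_nonneg c_star_pos
    by (intro add_left_mono sum_mono mult_left_mono mean_lyap_increment_le[OF \<open>0 \<le> l\<close> noise])
      (simp_all add: less_imp_le)
  also have "\<dots> = lyap y Q + 2 * l * ((\<Sum>q\<in>UNIV. y q / c_star q * E q * (\<Sum>r\<in>UNIV. mean_offspring q r * E r))
                          - (\<Sum>q\<in>UNIV. y q / c_star q * (E q)\<^sup>2))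
       + l\<^sup>2 * K * (\<Sum>q\<in>UNIV. y q / c_star q)"
    by (simp add: algebra_simps sum.distrib sum_distrib_left sum_distrib_right sum_subtractf power2_eq_square
        sum_divide_distrib)
  finally show ?thesis .
qed

lemma sum_sq_error_le_lyap:
  assumes "\<And>q. 0 < y q"
  shows "(\<Sum>r\<in>UNIV. (Q r - c_star r)\<^sup>2) \<le> (\<Sum>q\<in>UNIV. c_star q * pmf sel q / y q) * lyap y Q"
proof -
  have "(Q r - c_star r)\<^sup>2 \<le> c_star r * pmf sel r / y r * lyap y Q" for r
    using lyap_term_le[of y r Q] assms[of r] c_star_pos[of r] sel_pos[of r] assms
    by (simp add: less_imp_le field_simps)
  then show ?thesis
    unfolding sum_distrib_right by (rule sum_mono)
qed

lemma lyap_le_quadratic_gap: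
  assumes "\<And>q. 0 < y q"
  shows "\<exists>\<delta>>0. \<forall>Q. \<delta> * lyap y Q \<le>
    (\<Sum>q\<in>UNIV. y q * (c_star q - (\<Sum>r\<in>UNIV. mean_offspring q r * c_star r)) / (2 * (c_star q)\<^sup>2)
                 * (Q q - c_star q)\<^sup>2)"
proof (intro exI conjI allI)
  define w where "w q = y q * (c_star q - (\<Sum>r\<in>UNIV. mean_offspring q r * c_star r)) / (2 * (c_star q)\<^sup>2)" for q
  define u where "u q = y q / (c_star q * pmf sel q)" for q
  have "0 < w q" "0 < u q" for q
    unfolding w_def u_def using assms[of q] c_star_gt_mean_offspring[of q] c_star_pos[of q] sel_pos[of q]
    by simp_all
  then show "0 < Min (range (\<lambda>q. w q / u q))"
    by (subst Min_gr_iff) auto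
  fix Q
  have "Min (range (\<lambda>q. w q / u q)) * u q \<le> w q" for q
    using Min_le[of "range (\<lambda>q. w q / u q)" "w q / u q"] \<open>0 < u q\<close> by (simp add: pos_le_divide_eq)
  then show "Min (range (\<lambda>q. w q / u q)) * lyap y Q \<le> (\<Sum>q\<in>UNIV. w q * (Q q - c_star q)\<^sup>2)"
    unfolding lyap_def sum_distrib_left u_def[symmetric]
    by (intro sum_mono) (simp add: mult.assoc[symmetric] mult_right_mono)
qed

lemma lyap_drift_gap:
  assumes y_pos: "\<And>q. 0 < y q" and y_subinvariant: "\<And>r. (\<Sum>q\<in>UNIV. y q * mean_offspring q r) \<le> y r"
  shows "\<exists>\<delta>>0. \<forall>Q.
    (\<Sum>q\<in>UNIV. y q / c_star q * (Q q - c_star q) * (\<Sum>r\<in>UNIV. mean_offspring q r * (Q r - c_star r)))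
    - (\<Sum>q\<in>UNIV. y q / c_star q * (Q q - c_star q)\<^sup>2) \<le> - (\<delta> * lyap y Q)"
proof -
  obtain \<delta> where "0 < \<delta>" and gap: "\<forall>Q. \<delta> * lyap y Q \<le>
      (\<Sum>q\<in>UNIV. y q * (c_star q - (\<Sum>r\<in>UNIV. mean_offspring q r * c_star r)) / (2 * (c_star q)\<^sup>2)
                   * (Q q - c_star q)\<^sup>2)"
    using lyap_le_quadratic_gap[of y] y_pos by blast
  have "(\<Sum>q\<in>UNIV. y q / c_star q * (Q q - c_star q) * (\<Sum>r\<in>UNIV. mean_offspring q r * (Q r - c_star r)))
      - (\<Sum>q\<in>UNIV. y q / c_star q * (Q q - c_star q)\<^sup>2)
      \<le> - (\<Sum>q\<in>UNIV. y q * (c_star q - (\<Sum>r\<in>UNIV. mean_offspring q r * c_star r)) / (2 * (c_star q)\<^sup>2)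
                   * (Q q - c_star q)\<^sup>2)" (is "?G Q \<le> _") for Q
    by (rule quadratic_form_le_subinvariant)
      (simp_all add: mean_offspring_nonneg c_star_pos y_subinvariant less_imp_le[OF y_pos])
  note quad = this
  have "?G Q \<le> - (\<delta> * lyap y Q)" for Q
    using quad[of Q] gap[rule_format, of Q] by linarith
  with \<open>0 < \<delta>\<close> show ?thesis
    by blast
qed

lemma td_error_sq_le_lyap:
  assumes y_pos: "\<And>q. 0 < y q"
  obtains K where "0 \<le> K" and "\<And>Q q \<beta>. \<beta> \<in> set_pmf (p q) \<Longrightarrow> (td_error Q q \<beta>)\<^sup>2 \<le> K * (lyap y Q + 1)"
proof -
  obtain A B where "0 \<le> A" "0 \<le> B" and noise: "\<And>Q q \<beta>. \<beta> \<in> set_pmf (p q) \<Longrightarrow>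
      (td_error Q q \<beta>)\<^sup>2 \<le> A * (\<Sum>r\<in>UNIV. (Q r - c_star r)\<^sup>2) + B"
    using target_error_sq_bound by blast
  define U where "U = (\<Sum>q\<in>UNIV. c_star q * pmf sel q / y q)"
  have "0 \<le> U"
    unfolding U_def using y_pos c_star_pos sel_pos by (auto intro!: sum_nonneg simp: less_imp_le)
  have bound: "A * (\<Sum>r\<in>UNIV. (Q r - c_star r)\<^sup>2) + B \<le> (A * U + B) * (lyap y Q + 1)" for Q
  proof -
    have "A * (\<Sum>r\<in>UNIV. (Q r - c_star r)\<^sup>2) \<le> A * (U * lyap y Q)"
      using sum_sq_error_le_lyap[OF y_pos, of Q] \<open>0 \<le> A\<close> unfolding U_def by (rule mult_left_mono)
    moreover have "0 \<le> A * U" "0 \<le> B * lyap y Q"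
      using \<open>0 \<le> A\<close> \<open>0 \<le> B\<close> \<open>0 \<le> U\<close> lyap_nonneg[of y Q] y_pos by (simp_all add: less_imp_le)
    ultimately show ?thesis
      by (simp add: algebra_simps)
  qed
  show ?thesis
  proof (rule that)
    show "0 \<le> A * U + B"
      using \<open>0 \<le> A\<close> \<open>0 \<le> B\<close> \<open>0 \<le> U\<close> by simp
    show "(td_error Q q \<beta>)\<^sup>2 \<le> (A * U + B) * (lyap y Q + 1)" if "\<beta> \<in> set_pmf (p q)" for Q q \<beta>
      using noise[OF that] bound[of Q] by (rule order_trans)
  qed
qed

lemma lyap_drift:
  assumes y_ge_1: "\<And>q. 1 \<le> y q" and y_subinvariant: "\<And>r. (\<Sum>q\<in>UNIV. y q * mean_offspring q r) \<le> y r"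
  obtains \<delta> C where "0 < \<delta>" "\<delta> \<le> 1" "0 \<le> C"
    and "\<And>l Q. 0 \<le> l \<Longrightarrow> (\<integral>\<^sup>+x. ennreal (lyap y (qlearn_step c l Q x)) \<partial>measure_pmf (step_dist sel p))
           \<le> ennreal ((1 - \<delta> * l) * lyap y Q + C * l\<^sup>2 * (lyap y Q + 1))"
proof -
  have y_pos: "0 < y q" for q
    using y_ge_1[of q] by linarith
  obtain \<delta> where "0 < \<delta>" and gap: "\<forall>Q.
      (\<Sum>q\<in>UNIV. y q / c_star q * (Q q - c_star q) * (\<Sum>r\<in>UNIV. mean_offspring q r * (Q r - c_star r)))
      - (\<Sum>q\<in>UNIV. y q / c_star q * (Q q - c_star q)\<^sup>2) \<le> - (\<delta> * lyap y Q)"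
    using lyap_drift_gap[of y, OF y_pos y_subinvariant] by blast
  obtain K where "0 \<le> K" and noise: "\<And>Q q \<beta>. \<beta> \<in> set_pmf (p q) \<Longrightarrow> (td_error Q q \<beta>)\<^sup>2 \<le> K * (lyap y Q + 1)"
    by (rule td_error_sq_le_lyap[of y, OF y_pos]) blast
  define Y where "Y = (\<Sum>q\<in>UNIV. y q / c_star q)"
  have "0 \<le> Y"
    unfolding Y_def using y_pos c_star_pos by (auto intro!: sum_nonneg simp: less_imp_le)
  show ?thesis
  proof
    show "0 < min 1 (2 * \<delta>)" "min 1 (2 * \<delta>) \<le> 1" "0 \<le> K * Y"
      using \<open>0 < \<delta>\<close> \<open>0 \<le> K\<close> \<open>0 \<le> Y\<close> by simp_all
    fix l :: real and Q :: "'a \<Rightarrow> real"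
    assume "0 \<le> l"
    define V where "V = lyap y Q"
    have "0 \<le> V"
      unfolding V_def using y_pos by (intro lyap_nonneg less_imp_le)
    have "2 * l * (- (\<delta> * V)) \<le> - (min 1 (2 * \<delta>) * l * V)"
      using \<open>0 \<le> l\<close> \<open>0 \<le> V\<close> mult_right_mono[of "min 1 (2 * \<delta>)" "2 * \<delta>" "l * V"] by (simp add: mult_ac)
    moreover have "step_mean (\<lambda>x. lyap y (qlearn_step c l Q x))
        \<le> V + 2 * l * ((\<Sum>q\<in>UNIV. y q / c_star q * (Q q - c_star q)
                              * (\<Sum>r\<in>UNIV. mean_offspring q r * (Q r - c_star r)))
                         - (\<Sum>q\<in>UNIV. y q / c_star q * (Q q - c_star q)\<^sup>2))
          + l\<^sup>2 * (K * (V + 1)) * Y"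
      unfolding V_def Y_def
      by (rule step_mean_lyap_le) (simp_all add: \<open>0 \<le> l\<close> less_imp_le[OF y_pos] noise)
    moreover have "2 * l * ((\<Sum>q\<in>UNIV. y q / c_star q * (Q q - c_star q)
                              * (\<Sum>r\<in>UNIV. mean_offspring q r * (Q r - c_star r)))
                         - (\<Sum>q\<in>UNIV. y q / c_star q * (Q q - c_star q)\<^sup>2)) \<le> 2 * l * (- (\<delta> * V))"
      unfolding V_def using gap \<open>0 \<le> l\<close> by (intro mult_left_mono) simp_all
    moreover have "l\<^sup>2 * (K * (V + 1)) * Y = K * Y * l\<^sup>2 * (V + 1)"
      by (simp add: mult_ac)
    ultimately have "step_mean (\<lambda>x. lyap y (qlearn_step c l Q x))
        \<le> V - min 1 (2 * \<delta>) * l * V + K * Y * l\<^sup>2 * (V + 1)"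
      by linarith
    also have "\<dots> = (1 - min 1 (2 * \<delta>) * l) * V + K * Y * l\<^sup>2 * (V + 1)"
      by (simp add: algebra_simps)
    finally show "(\<integral>\<^sup>+x. ennreal (lyap y (qlearn_step c l Q x)) \<partial>measure_pmf (step_dist sel p))
        \<le> ennreal ((1 - min 1 (2 * \<delta>) * l) * lyap y Q + K * Y * l\<^sup>2 * (lyap y Q + 1))"
      unfolding V_def using y_pos
      by (subst nn_integral_step_dist) (simp_all add: lyap_nonneg less_imp_le ennreal_leI)
  qed
qed

lemma tendsto_c_star_of_lyap_tendsto_zero:
  assumes "\<And>q. 0 < y q" and "(\<lambda>n. lyap y (Qs n)) \<longlonglongrightarrow> 0"
  shows "(\<lambda>n. Qs n q) \<longlonglongrightarrow> c_star q"
proof -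
  define u where "u = y q / (c_star q * pmf sel q)"
  have "0 < u"
    unfolding u_def using assms(1) c_star_pos sel_pos by simp
  have "(\<lambda>n. (Qs n q - c_star q)\<^sup>2) \<longlonglongrightarrow> 0"
  proof (rule tendsto_sandwich[OF _ _ tendsto_const])
    show "\<forall>\<^sub>F n in sequentially. 0 \<le> (Qs n q - c_star q)\<^sup>2"
      by simp
    show "\<forall>\<^sub>F n in sequentially. (Qs n q - c_star q)\<^sup>2 \<le> lyap y (Qs n) / u"
      using lyap_term_le[of y q] assms(1) \<open>0 < u\<close> unfolding u_def[symmetric]
      by (simp add: less_imp_le pos_le_divide_eq mult.commute)
    show "(\<lambda>n. lyap y (Qs n) / u) \<longlonglongrightarrow> 0"
      using tendsto_divide_zero[OF assms(2)] .
  qed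
  then have "(\<lambda>n. \<bar>Qs n q - c_star q\<bar>) \<longlonglongrightarrow> 0"
    using tendsto_real_sqrt by fastforce
  then show ?thesis
    by (simp add: tendsto_rabs_zero_iff LIM_zero_iff)
qed

end

text \<open>The iterate after \<open>n\<close> steps depends only on the first \<open>n\<close> samples; the padding is irrelevant.\<close>
definition Qlearn_list :: "(nat \<Rightarrow> real) \<Rightarrow> ('a \<Rightarrow> real) \<Rightarrow> ('a \<Rightarrow> real) \<Rightarrow> ('a \<times> 'a list) list \<Rightarrow> 'a \<Rightarrow> real" where
  "Qlearn_list lr c Q0 xs = Qlearn lr c Q0 (xs @- sconst undefined) (length xs)"

lemma Qlearn_cong_prefix:
  "(\<And>k. k < n \<Longrightarrow> \<omega> !! k = \<omega>' !! k) \<Longrightarrow> Qlearn lr c Q0 \<omega> n = Qlearn lr c Q0 \<omega>' n"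
  by (induction n) (simp_all add: Let_def)

lemma Qlearn_eq_Qlearn_list: "Qlearn lr c Q0 \<omega> n = Qlearn_list lr c Q0 (stake n \<omega>)"
  unfolding Qlearn_list_def length_stake by (rule Qlearn_cong_prefix) simp

lemma Qlearn_list_snoc: "Qlearn_list lr c Q0 (xs @ [x]) = qlearn_step c (lr (length xs)) (Qlearn_list lr c Q0 xs) x"
proof -
  have "Qlearn_list lr c Q0 (xs @ [x])
      = qlearn_step c (lr (length xs)) (Qlearn lr c Q0 ((xs @ [x]) @- sconst undefined) (length xs)) x"
    unfolding Qlearn_list_def length_append_singleton Qlearn_Suc_qlearn_step by simp
  also have "Qlearn lr c Q0 ((xs @ [x]) @- sconst undefined) (length xs) = Qlearn_list lr c Q0 xs"
    unfolding Qlearn_list_def by (rule Qlearn_cong_prefix) (simp add: nth_append)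
  finally show ?thesis .
qed

theorem theorem5:
  fixes p :: "'a::finite \<Rightarrow> 'a list pmf" and c :: "'a \<Rightarrow> real"
    and lr :: "nat \<Rightarrow> real" and sel :: "'a pmf" and pmin :: real and Q0 :: "'a \<Rightarrow> real"
  assumes "bmc p c"
    and "\<forall>q. cstar p c q < \<infinity>"
    and "\<forall>i. 0 \<le> lr i \<and> lr i \<le> 1"
    and "\<not> summable lr"
    and "summable (\<lambda>i. (lr i)\<^sup>2)"
    and "pmin > 0" and "\<forall>q. pmf sel q \<ge> pmin"
    and "\<forall>q. Q0 q \<ge> 0"
  shows "AE \<omega> in stream_space (measure_pmf (step_dist sel p)).
           \<forall>q. (\<lambda>i. Qlearn lr c Q0 \<omega> i q) \<longlonglongrightarrow> enn2real (cstar p c q)"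
proof -
  interpret bmc_qlearning p c sel
    using assms(1,2,6,7) by unfold_locales (auto intro: less_le_trans)
  obtain y where y_ge_1: "\<And>q. 1 \<le> y q" and "\<And>r. (\<Sum>q\<in>UNIV. y q * mean_offspring q r) \<le> y r"
    using exists_subinvariant_weights[OF mean_offspring_nonneg c_star_pos c_star_gt_mean_offspring] by blast
  then obtain \<delta> C where "0 < \<delta>" "\<delta> \<le> 1" "0 \<le> C"
    and drift: "\<And>l Q. 0 \<le> l \<Longrightarrow> (\<integral>\<^sup>+x. ennreal (lyap y (qlearn_step c l Q x)) \<partial>measure_pmf (step_dist sel p))
           \<le> ennreal ((1 - \<delta> * l) * lyap y Q + C * l\<^sup>2 * (lyap y Q + 1))"
    by (rule lyap_drift) blast+
  have y_pos: "0 < y q" for q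
    using y_ge_1[of q] by linarith
  have lr_nonneg: "0 \<le> lr n" for n
    using assms(3) by simp
  have "AE \<omega> in stream_space (measure_pmf (step_dist sel p)).
          (\<lambda>n. lyap y (Qlearn_list lr c Q0 (stake n \<omega>))) \<longlonglongrightarrow> 0"
  proof (rule AE_tendsto_zero_of_drift[where W="\<lambda>n xs. lyap y (Qlearn_list lr c Q0 xs)",
        OF _ \<open>0 < \<delta>\<close> \<open>\<delta> \<le> 1\<close> \<open>0 \<le> C\<close> lr_nonneg _ assms(4,5)])
    show "0 \<le> lyap y (Qlearn_list lr c Q0 xs)" for xs
      using y_pos by (simp add: lyap_nonneg less_imp_le)
    show "lr n \<le> 1" for n
      using assms(3) by simp
    show "(\<integral>\<^sup>+x. ennreal (lyap y (Qlearn_list lr c Q0 (xs @ [x]))) \<partial>measure_pmf (step_dist sel p))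
        \<le> ennreal ((1 - \<delta> * lr (length xs)) * lyap y (Qlearn_list lr c Q0 xs)
                   + C * (lr (length xs))\<^sup>2 * (lyap y (Qlearn_list lr c Q0 xs) + 1))" for xs
      unfolding Qlearn_list_snoc by (rule drift[OF lr_nonneg])
  qed
  then show ?thesis
    by (rule AE_mp) (auto simp: Qlearn_eq_Qlearn_list c_star_def[symmetric]
        intro: tendsto_c_star_of_lyap_tendsto_zero[OF y_pos])
qed

end
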